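(* Let $G_\bullet/\Gamma$ be a nilmanifold of length $d$ and let $r\le d$. Define $\tilde G_i=G_r$ for $i\le r$ and $\tilde G_i=G_i$ for $i\ge r$, and $\tilde\Gamma=G_r\cap\Gamma$. Let $\iota:G_r/(G_r\cap\Gamma)\to G/\Gamma$ be the inclusion $g(G_r\cap\Gamma)\mapsto g\Gamma$. Then $\bar h\mapsto\iota\circ\bar h$ is a bijection from $\mathrm{poly}(\mathscr F_\emptyset\to\tilde G_\bullet/\tilde\Gamma)$ onto the set of those $\bar f\in\mathrm{poly}(\mathscr F_\emptyset\to G_\bullet/\Gamma)$ which take values in $G_r\Gamma=\{g\Gamma:g\in G_r\}\subset G/\Gamma$.
   Context: $\mathscr F$ is the family of finite non-empty subsets of $\mathbb N=\{1,2,\dots\}$, $\mathscr F_\emptyset=\mathscr F\cup\{\emptyset\}$. A prefiltration $G_\bullet$ on a nilpotent Lie group $G$: Lie subgroups $G=G_0\supseteq G_1\supseteq\cdots$ with $[G_i,G_j]\subseteq G_{i+j}$ and $G_{d+1}=\{e\}$ ($d$ minimal = length); a filtration if also $G_0=G_1=G$; $G_{\bullet+1}$ is $i\mapsto G_{i+1}$. If $\Gamma<G$ is discrete cocompact and each $G_i\cap\Gamma$ is cocompact in $G_i$, $G_\bullet/\Gamma$ is a nilmanifold of length $d$. $g:\mathscr F_\emptyset\to G$ is in $\mathrm{poly}(\mathscr F_\emptyset\to G_\bullet)$ if either $G_0=\{e\}$ and $g\equiv e$, or for each $\beta\in\mathscr F_\emptyset$ there is $D_\beta g\in\mathrm{poly}(\mathscr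 F_\emptyset\to G_{\bullet+1})$ with $D_\beta g(\alpha)=g(\alpha)^{-1}g(\alpha\cup\beta)$ whenever $\alpha\cap\beta=\emptyset$; for a prefiltration $H_\bullet$ with discrete cocompact $\Lambda<H_0$, $\mathrm{poly}(\mathscr F_\emptyset\to H_\bullet/\Lambda)$ consists of the maps $\alpha\mapsto g(\alpha)\Lambda$ with $g\in\mathrm{poly}(\mathscr F_\emptyset\to H_\bullet)$. *)

theory Defs
  imports "HOL-Algebra.Coset" "HOL-Algebra.Generated_Groups" "HOL-Analysis.Analysis"
begin

definition grp_commutator :: "('a, 'b) monoid_scheme \<Rightarrow> 'a \<Rightarrow> 'a \<Rightarrow> 'a" where
  "grp_commutator G x y = x \<otimes>\<^bsub>G\<^esub> y \<otimes>\<^bsub>G\<^esub> inv\<^bsub>G\<^esub> x \<otimes>\<^bsub>G\<^esub> inv\<^bsub>G\<^esub> y"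

definition comm_subgroup :: "('a, 'b) monoid_scheme \<Rightarrow> 'a set \<Rightarrow> 'a set \<Rightarrow> 'a set" where
  "comm_subgroup G A B = generate G {grp_commutator G x y | x y. x \<in> A \<and> y \<in> B}"

fun lower_central :: "('a, 'b) monoid_scheme \<Rightarrow> nat \<Rightarrow> 'a set" where
  "lower_central G 0 = carrier G"
| "lower_central G (Suc n) = comm_subgroup G (carrier G) (lower_central G n)"

definition nilpotent_group :: "('a, 'b) monoid_scheme \<Rightarrow> bool" where
  "nilpotent_group G \<longleftrightarrow> group G \<and> (\<exists>n. lower_central G n = {\<one>\<^bsub>G\<^esub>})"

definition topological_group :: "('a, 'b) monoid_scheme \<Rightarrow> 'a topology \<Rightarrow> bool" where
  "topological_group G T \<longleftrightarrow> group G \<and> topspace T = carrier G \<and>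
     continuous_map (prod_topology T T) T (\<lambda>(x, y). x \<otimes>\<^bsub>G\<^esub> y) \<and>
     continuous_map T T (\<lambda>x. inv\<^bsub>G\<^esub> x)"

text \<open>A Lie group, via Gleason--Montgomery--Zippin: a topological group whose underlying
  space is a topological manifold (Hausdorff, second countable, locally Euclidean of some
  dimension n). Such a group carries a unique compatible Lie group structure.\<close>
definition lie_group :: "('a, 'b) monoid_scheme \<Rightarrow> 'a topology \<Rightarrow> bool" where
  "lie_group G T \<longleftrightarrow> topological_group G T \<and> Hausdorff_space T \<and> second_countable T \<and>
     (\<exists>n. \<forall>x \<in> topspace T. \<exists>U V. openin T U \<and> x \<in> U \<and> openin (Euclidean_space n) V \<and>
          subtopology T U homeomorphic_space subtopology (Euclidean_space n) V)"

definition discrete_in :: "'a topology \<Rightarrow> 'a set \<Rightarrow> bool" where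
  "discrete_in T S \<longleftrightarrow> (\<forall>x \<in> S. \<exists>U. openin T U \<and> U \<inter> S = {x})"

definition cocompact_in :: "('a, 'b) monoid_scheme \<Rightarrow> 'a topology \<Rightarrow> 'a set \<Rightarrow> 'a set \<Rightarrow> bool" where
  "cocompact_in G T H \<Lambda> \<longleftrightarrow> (\<exists>K. compactin T K \<and> K \<subseteq> H \<and> H = K <#>\<^bsub>G\<^esub> \<Lambda>)"

definition prefiltration :: "('a, 'b) monoid_scheme \<Rightarrow> (nat \<Rightarrow> 'a set) \<Rightarrow> nat \<Rightarrow> bool" where
  "prefiltration G Gs d \<longleftrightarrow> Gs 0 = carrier G \<and> (\<forall>i. subgroup (Gs i) G) \<and>
     (\<forall>i. Gs (Suc i) \<subseteq> Gs i) \<and>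
     (\<forall>i j. comm_subgroup G (Gs i) (Gs j) \<subseteq> Gs (i + j)) \<and>
     Gs (Suc d) = {\<one>\<^bsub>G\<^esub>} \<and> (\<forall>d'. Gs (Suc d') = {\<one>\<^bsub>G\<^esub>} \<longrightarrow> d \<le> d')"

definition nilmanifold ::
  "('a, 'b) monoid_scheme \<Rightarrow> 'a topology \<Rightarrow> (nat \<Rightarrow> 'a set) \<Rightarrow> 'a set \<Rightarrow> nat \<Rightarrow> bool" where
  "nilmanifold G T Gs \<Gamma> d \<longleftrightarrow> lie_group G T \<and> nilpotent_group G \<and> prefiltration G Gs d \<and>
     subgroup \<Gamma> G \<and> discrete_in T \<Gamma> \<and> cocompact_in G T (carrier G) \<Gamma> \<and>
     (\<forall>i. cocompact_in G T (Gs i) (Gs i \<inter> \<Gamma>))"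

definition FE :: "nat set set" where
  "FE = {\<alpha>. finite \<alpha> \<and> 0 \<notin> \<alpha>}"

text \<open>\<open>poly(\<F>\<^sub>\<emptyset> \<rightarrow> G\<^sub>\<bullet>)\<close>, the maps \<open>\<F>\<^sub>\<emptyset> \<rightarrow> G\<^sub>0\<close> (only values on \<open>\<F>\<^sub>\<emptyset>\<close> matter).\<close>
inductive poly_map :: "('a, 'b) monoid_scheme \<Rightarrow> (nat \<Rightarrow> 'a set) \<Rightarrow> (nat set \<Rightarrow> 'a) \<Rightarrow> bool"
  for G where
  triv: "Gs 0 = {\<one>\<^bsub>G\<^esub>} \<Longrightarrow> (\<forall>\<alpha>\<in>FE. g \<alpha> = \<one>\<^bsub>G\<^esub>) \<Longrightarrow> poly_map G Gs g"
| step: "(\<forall>\<alpha>\<in>FE. g \<alpha> \<in> Gs 0) \<Longrightarrow>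
         (\<forall>\<beta>\<in>FE. \<exists>Dg. poly_map G (\<lambda>i. Gs (Suc i)) Dg \<and>
             (\<forall>\<alpha>\<in>FE. \<alpha> \<inter> \<beta> = {} \<longrightarrow> Dg \<alpha> = inv\<^bsub>G\<^esub> (g \<alpha>) \<otimes>\<^bsub>G\<^esub> g (\<alpha> \<union> \<beta>))) \<Longrightarrow>
         poly_map G Gs g"

definition poly_quot ::
  "('a, 'b) monoid_scheme \<Rightarrow> (nat \<Rightarrow> 'a set) \<Rightarrow> 'a set \<Rightarrow> (nat set \<Rightarrow> 'a set) set" where
  "poly_quot G Gs \<Lambda> = {(\<lambda>\<alpha>\<in>FE. g \<alpha> <#\<^bsub>G\<^esub> \<Lambda>) | g. poly_map G Gs g}"

text \<open>The inclusion \<open>\<iota> : G\<^sub>r/(G\<^sub>r\<inter>\<Gamma>) \<rightarrow> G/\<Gamma>\<close>, \<open>g(G\<^sub>r\<inter>\<Gamma>) \<mapsto> g\<Gamma>\<close>, written as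
  \<open>C \<mapsto> C\<Gamma>\<close> (indeed \<open>g(G\<^sub>r\<inter>\<Gamma>)\<Gamma> = g\<Gamma>\<close>).\<close>
definition coset_incl :: "('a, 'b) monoid_scheme \<Rightarrow> 'a set \<Rightarrow> 'a set \<Rightarrow> 'a set" where
  "coset_incl G \<Gamma> C = C <#>\<^bsub>G\<^esub> \<Gamma>"

end

theory Submission
  imports Defs "HOL-Algebra.FiniteProduct"
begin

text \<open>A map \<open>g\<close> is polynomial for \<open>G\<^sub>\<bullet>\<close> iff every iterated derivative of order \<open>m\<close> takes
  values in \<open>G\<^sub>m\<close>. In this form polynomiality is local (a derivative sees only finitely many
  values) and, by commutator identities, closed under pointwise products.

  Given \<open>f\<close> with values in \<open>G\<^sub>r\<Gamma>\<close>, lift it to a polynomial \<open>g\<close> and multiply \<open>g\<close> by a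
  polynomial \<open>\<Gamma>\<close>-valued map \<open>\<gamma>\<close> so that \<open>g\<gamma>\<close> takes values in \<open>G\<^sub>r\<close>, raising the level one
  step at a time. On the layer \<open>G\<^sub>j/G\<^sub>j\<^sub>+\<^sub>1\<close>, abelian for \<open>j \<ge> 1\<close>, Moebius inversion writes
  \<open>g(\<alpha>)\<close> as a product of coefficients \<open>c\<^sub>\<beta>\<close> over \<open>\<beta> \<subseteq> \<alpha>\<close>; they vanish for \<open>|\<beta>| > j\<close>
  and lie in the image of \<open>\<Gamma> \<inter> G\<^sub>j\<close>, so their lifts give \<open>\<gamma>\<close> as a product of monomials.
  A map with values in \<open>G\<^sub>r\<close> is polynomial for the truncated filtration iff it is polynomial
  for \<open>G\<^sub>\<bullet>\<close>, since its derivatives of order at most \<open>r\<close> automatically lie in \<open>G\<^sub>r\<close>;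
  injectivity is a coset computation.\<close>

lemma FE_Diff: "\<alpha> \<in> FE \<Longrightarrow> \<alpha> - \<beta> \<in> FE"
  by (auto simp: FE_def)

lemma FE_Un: "\<alpha> \<in> FE \<Longrightarrow> \<beta> \<in> FE \<Longrightarrow> \<alpha> \<union> \<beta> \<in> FE"
  by (auto simp: FE_def)

lemma FE_subset: "\<alpha> \<in> FE \<Longrightarrow> \<beta> \<subseteq> \<alpha> \<Longrightarrow> \<beta> \<in> FE"
  by (auto simp: FE_def intro: finite_subset)

lemma empty_in_FE: "{} \<in> FE"
  by (simp add: FE_def)

section \<open>Finite differences and polynomial maps\<close>

text \<open>The derivative \<open>D\<^sub>\<beta>\<close> of \<open>poly_map\<close>, extended from the \<open>\<alpha>\<close> disjoint from \<open>\<beta>\<close>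
  to all \<open>\<alpha>\<close> by first removing \<open>\<beta>\<close> from \<open>\<alpha>\<close>.\<close>
definition fdiff :: "('a, 'b) monoid_scheme \<Rightarrow> nat set \<Rightarrow> (nat set \<Rightarrow> 'a) \<Rightarrow> nat set \<Rightarrow> 'a" where
  "fdiff G \<beta> h \<alpha> = inv\<^bsub>G\<^esub> (h (\<alpha> - \<beta>)) \<otimes>\<^bsub>G\<^esub> h (\<alpha> \<union> \<beta>)"

fun fdiffs :: "('a, 'b) monoid_scheme \<Rightarrow> nat set list \<Rightarrow> (nat set \<Rightarrow> 'a) \<Rightarrow> nat set \<Rightarrow> 'a" where
  "fdiffs G [] h = h"
| "fdiffs G (\<beta> # \<beta>s) h = fdiffs G \<beta>s (fdiff G \<beta> h)"

definition poly_upto :: "('a, 'b) monoid_scheme \<Rightarrow> (nat \<Rightarrow> 'a set) \<Rightarrow> nat \<Rightarrow> nat \<Rightarrow> (nat set \<Rightarrow> 'a) \<Rightarrow> bool"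
  where "poly_upto G Gs n k h \<longleftrightarrow> (\<forall>\<beta>s \<alpha>. length \<beta>s \<le> n \<longrightarrow> set \<beta>s \<subseteq> FE \<longrightarrow> \<alpha> \<in> FE \<longrightarrow>
      fdiffs G \<beta>s h \<alpha> \<in> Gs (k + length \<beta>s))"

lemma poly_upto_0: "poly_upto G Gs 0 k h \<longleftrightarrow> (\<forall>\<alpha>\<in>FE. h \<alpha> \<in> Gs k)"
  unfolding poly_upto_def by auto

lemma poly_upto_Suc:
  "poly_upto G Gs (Suc n) k h \<longleftrightarrow>
     (\<forall>\<alpha>\<in>FE. h \<alpha> \<in> Gs k) \<and> (\<forall>\<beta>\<in>FE. poly_upto G Gs n (Suc k) (fdiff G \<beta> h))"
proof
  assume h: "poly_upto G Gs (Suc n) k h"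
  have "\<forall>\<alpha>\<in>FE. h \<alpha> \<in> Gs k"
    using h[unfolded poly_upto_def, rule_format, of "[]"] by simp
  moreover have "poly_upto G Gs n (Suc k) (fdiff G \<beta> h)" if "\<beta> \<in> FE" for \<beta>
    unfolding poly_upto_def
  proof (intro allI impI)
    fix \<beta>s \<alpha> assume "length \<beta>s \<le> n" "set \<beta>s \<subseteq> FE" "\<alpha> \<in> FE"
    then show "fdiffs G \<beta>s (fdiff G \<beta> h) \<alpha> \<in> Gs (Suc k + length \<beta>s)"
      using h[unfolded poly_upto_def, rule_format, of "\<beta> # \<beta>s" \<alpha>] that by simp
  qed
  ultimately show "(\<forall>\<alpha>\<in>FE. h \<alpha> \<in> Gs k) \<and> (\<forall>\<beta>\<in>FE. poly_upto G Gs n (Suc k) (fdiff G \<beta> h))"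
    by blast
next
  assume h: "(\<forall>\<alpha>\<in>FE. h \<alpha> \<in> Gs k) \<and> (\<forall>\<beta>\<in>FE. poly_upto G Gs n (Suc k) (fdiff G \<beta> h))"
  show "poly_upto G Gs (Suc n) k h"
    unfolding poly_upto_def
  proof (intro allI impI)
    fix \<beta>s \<alpha> assume \<beta>s: "length \<beta>s \<le> Suc n" "set \<beta>s \<subseteq> FE" and \<alpha>: "\<alpha> \<in> FE"
    show "fdiffs G \<beta>s h \<alpha> \<in> Gs (k + length \<beta>s)"
    proof (cases \<beta>s)
      case Nil
      then show ?thesis using h \<alpha> by simp
    next
      case (Cons \<beta> \<beta>s')
      then have "fdiffs G \<beta>s' (fdiff G \<beta> h) \<alpha> \<in> Gs (Suc k + length \<beta>s')"
        using h \<beta>s \<alpha> unfolding poly_upto_def by simp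
      then show ?thesis using Cons by simp
    qed
  qed
qed

lemma poly_upto_shift: "poly_upto G Gs n (Suc k) h = poly_upto G (\<lambda>i. Gs (Suc i)) n k h"
  unfolding poly_upto_def by simp

lemma poly_upto_le: "poly_upto G Gs n k h \<Longrightarrow> m \<le> n \<Longrightarrow> poly_upto G Gs m k h"
  unfolding poly_upto_def by auto

lemma fdiffs_local:
  assumes "set \<beta>s \<subseteq> Pow U" "\<alpha> \<subseteq> U" "\<And>y. y \<subseteq> U \<Longrightarrow> h y = h' y"
  shows "fdiffs G \<beta>s h \<alpha> = fdiffs G \<beta>s h' \<alpha>"
  using assms
proof (induction \<beta>s arbitrary: h h')
  case (Cons \<beta> \<beta>s)
  have "fdiff G \<beta> h y = fdiff G \<beta> h' y" if "y \<subseteq> U" for y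
  proof -
    have "y - \<beta> \<subseteq> U" "y \<union> \<beta> \<subseteq> U"
      using Cons.prems(1) that by auto
    then show ?thesis
      using Cons.prems(3) by (simp add: fdiff_def)
  qed
  then show ?case
    using Cons.prems Cons.IH[of "fdiff G \<beta> h" "fdiff G \<beta> h'"] by simp
qed simp

lemma fdiffs_cong:
  "set \<beta>s \<subseteq> FE \<Longrightarrow> (\<And>x. x \<in> FE \<Longrightarrow> h x = h' x) \<Longrightarrow> \<alpha> \<in> FE \<Longrightarrow> fdiffs G \<beta>s h \<alpha> = fdiffs G \<beta>s h' \<alpha>"
proof (induction \<beta>s arbitrary: h h')
  case (Cons \<beta> \<beta>s)
  have "fdiff G \<beta> h x = fdiff G \<beta> h' x" if "x \<in> FE" for x
    using Cons.prems that by (simp add: fdiff_def FE_Diff FE_Un)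
  then show ?case
    using Cons.prems Cons.IH[of "fdiff G \<beta> h" "fdiff G \<beta> h'"] by simp
qed simp

lemma poly_upto_cong:
  "poly_upto G Gs n k h' \<Longrightarrow> (\<And>x. x \<in> FE \<Longrightarrow> h x = h' x) \<Longrightarrow> poly_upto G Gs n k h"
  unfolding poly_upto_def using fdiffs_cong[of _ h h' _ G] by simp

text \<open>Only finitely many values of \<open>h\<close> enter a given derivative, so it suffices to match \<open>h\<close>
  locally by polynomial maps.\<close>
lemma poly_upto_local:
  assumes "\<And>\<beta>s \<alpha>. length \<beta>s \<le> n \<Longrightarrow> set \<beta>s \<subseteq> FE \<Longrightarrow> \<alpha> \<in> FE \<Longrightarrow>
     \<exists>h'. poly_upto G Gs n k h' \<and> (\<forall>y. y \<subseteq> \<alpha> \<union> \<Union>(set \<beta>s) \<longrightarrow> h y = h' y)"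
  shows "poly_upto G Gs n k h"
  unfolding poly_upto_def
proof (intro allI impI)
  fix \<beta>s \<alpha> assume \<beta>s: "length \<beta>s \<le> n" "set \<beta>s \<subseteq> FE" and \<alpha>: "\<alpha> \<in> FE"
  obtain h' where h': "poly_upto G Gs n k h'" "\<forall>y. y \<subseteq> \<alpha> \<union> \<Union>(set \<beta>s) \<longrightarrow> h y = h' y"
    using assms[OF \<beta>s \<alpha>] by blast
  have "fdiffs G \<beta>s h \<alpha> = fdiffs G \<beta>s h' \<alpha>"
    using h'(2) by (intro fdiffs_local[where U = "\<alpha> \<union> \<Union>(set \<beta>s)"]) auto
  then show "fdiffs G \<beta>s h \<alpha> \<in> Gs (k + length \<beta>s)"
    using h'(1) \<beta>s \<alpha> unfolding poly_upto_def by simp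
qed

lemma fdiff_comp_Diff: "fdiff G \<beta>' (\<lambda>\<alpha>. h (\<alpha> - \<beta>)) = (\<lambda>\<alpha>. fdiff G (\<beta>' - \<beta>) h (\<alpha> - \<beta>))"
proof
  fix \<alpha>
  have "\<alpha> - \<beta>' - \<beta> = \<alpha> - \<beta> - (\<beta>' - \<beta>)" "(\<alpha> \<union> \<beta>') - \<beta> = (\<alpha> - \<beta>) \<union> (\<beta>' - \<beta>)"
    by blast+
  then show "fdiff G \<beta>' (\<lambda>\<alpha>. h (\<alpha> - \<beta>)) \<alpha> = fdiff G (\<beta>' - \<beta>) h (\<alpha> - \<beta>)"
    by (simp add: fdiff_def)
qed

lemma poly_upto_comp_Diff: "poly_upto G Gs n k h \<Longrightarrow> poly_upto G Gs n k (\<lambda>\<alpha>. h (\<alpha> - \<beta>))"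
proof (induction n arbitrary: k h)
  case 0
  then show ?case by (auto simp: poly_upto_0 FE_Diff)
next
  case (Suc n)
  have "poly_upto G Gs n (Suc k) (\<lambda>\<alpha>. fdiff G (\<beta>' - \<beta>) h (\<alpha> - \<beta>))" if "\<beta>' \<in> FE" for \<beta>'
    using Suc.prems that by (intro Suc.IH) (simp add: poly_upto_Suc FE_Diff)
  then show ?case
    using Suc.prems unfolding poly_upto_Suc fdiff_comp_Diff by (simp add: FE_Diff)
qed

lemma fdiffs_in_subgroup:
  assumes "subgroup K G" "set \<beta>s \<subseteq> FE" "\<alpha> \<in> FE" "\<And>x. x \<in> FE \<Longrightarrow> h x \<in> K"
  shows "fdiffs G \<beta>s h \<alpha> \<in> K"
  using assms(2-4)
proof (induction \<beta>s arbitrary: h)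
  case (Cons \<beta> \<beta>s)
  have "fdiff G \<beta> h x \<in> K" if "x \<in> FE" for x
    unfolding fdiff_def using Cons.prems assms(1) that
    by (auto intro!: subgroup.m_closed subgroup.m_inv_closed simp: FE_Diff FE_Un)
  then show ?case
    using Cons by simp
qed simp

lemma poly_upto_one:
  assumes "group G" "\<And>i. \<one>\<^bsub>G\<^esub> \<in> Gs i"
  shows "poly_upto G Gs n k (\<lambda>_. \<one>\<^bsub>G\<^esub>)"
proof -
  have "fdiff G \<beta> (\<lambda>_. \<one>\<^bsub>G\<^esub>) = (\<lambda>_. \<one>\<^bsub>G\<^esub>)" for \<beta>
    using group.is_monoid[OF assms(1)] by (simp add: fdiff_def fun_eq_iff monoid.inv_one)
  then have "fdiffs G \<beta>s (\<lambda>_. \<one>\<^bsub>G\<^esub>) = (\<lambda>_. \<one>\<^bsub>G\<^esub>)" for \<beta>s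
    by (induction \<beta>s) simp_all
  then show ?thesis
    using assms(2) by (simp add: poly_upto_def)
qed

lemma poly_map_imp_poly_upto:
  "poly_map G Gs g \<Longrightarrow> group G \<Longrightarrow> (\<And>i. \<one>\<^bsub>G\<^esub> \<in> Gs i) \<Longrightarrow> poly_upto G Gs n 0 g"
proof (induction arbitrary: n rule: poly_map.induct)
  case (triv Gs g)
  then show ?case
    by (intro poly_upto_cong[OF poly_upto_one]) auto
next
  case (step g Gs)
  show ?case
  proof (cases n)
    case 0
    then show ?thesis using step.hyps(1) by (simp add: poly_upto_0)
  next
    case (Suc m)
    have "poly_upto G Gs m (Suc 0) (fdiff G \<beta> g)" if \<beta>: "\<beta> \<in> FE" for \<beta>
    proof -
      obtain Dg where Dg: "\<And>n. poly_upto G (\<lambda>i. Gs (Suc i)) n 0 Dg"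
        "\<forall>\<alpha>\<in>FE. \<alpha> \<inter> \<beta> = {} \<longrightarrow> Dg \<alpha> = inv\<^bsub>G\<^esub> (g \<alpha>) \<otimes>\<^bsub>G\<^esub> g (\<alpha> \<union> \<beta>)"
        using step.IH \<beta> step.prems by blast
      have "fdiff G \<beta> g x = Dg (x - \<beta>)" if "x \<in> FE" for x
      proof -
        have "(x - \<beta>) \<union> \<beta> = x \<union> \<beta>" "(x - \<beta>) \<inter> \<beta> = {}"
          by blast+
        then show ?thesis
          using Dg(2) FE_Diff[OF that] by (simp add: fdiff_def)
      qed
      then show ?thesis
        using poly_upto_cong[OF poly_upto_comp_Diff[OF Dg(1)]] by (simp add: poly_upto_shift)
    qed
    then show ?thesis
      using step.hyps(1) Suc by (simp add: poly_upto_Suc)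
  qed
qed

lemma poly_upto_imp_poly_map:
  "Gs N = {\<one>\<^bsub>G\<^esub>} \<Longrightarrow> poly_upto G Gs N 0 g \<Longrightarrow> poly_map G Gs g"
proof (induction N arbitrary: Gs g)
  case 0
  then show ?case
    by (intro poly_map.triv) (auto simp: poly_upto_0)
next
  case (Suc N)
  show ?case
  proof (rule poly_map.step)
    show "\<forall>\<alpha>\<in>FE. g \<alpha> \<in> Gs 0"
      using Suc.prems(2) by (simp add: poly_upto_Suc)
    show "\<forall>\<beta>\<in>FE. \<exists>Dg. poly_map G (\<lambda>i. Gs (Suc i)) Dg \<and>
             (\<forall>\<alpha>\<in>FE. \<alpha> \<inter> \<beta> = {} \<longrightarrow> Dg \<alpha> = inv\<^bsub>G\<^esub> (g \<alpha>) \<otimes>\<^bsub>G\<^esub> g (\<alpha> \<union> \<beta>))"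
    proof
      fix \<beta> assume "\<beta> \<in> FE"
      then have "poly_map G (\<lambda>i. Gs (Suc i)) (fdiff G \<beta> g)"
        using Suc.prems by (intro Suc.IH) (simp_all add: poly_upto_Suc poly_upto_shift)
      moreover have "\<forall>\<alpha>\<in>FE. \<alpha> \<inter> \<beta> = {} \<longrightarrow> fdiff G \<beta> g \<alpha> = inv\<^bsub>G\<^esub> (g \<alpha>) \<otimes>\<^bsub>G\<^esub> g (\<alpha> \<union> \<beta>)"
        by (auto simp: fdiff_def Diff_triv)
      ultimately show "\<exists>Dg. poly_map G (\<lambda>i. Gs (Suc i)) Dg \<and>
             (\<forall>\<alpha>\<in>FE. \<alpha> \<inter> \<beta> = {} \<longrightarrow> Dg \<alpha> = inv\<^bsub>G\<^esub> (g \<alpha>) \<otimes>\<^bsub>G\<^esub> g (\<alpha> \<union> \<beta>))"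
        by blast
    qed
  qed
qed


section \<open>Products and commutators of polynomial maps\<close>

text \<open>Note the convention \<open>[a, b] = a\<inverse>b\<inverse>ab\<close>, whereas \<open>grp_commutator\<close> is \<open>aba\<inverse>b\<inverse>\<close>.\<close>
definition commutator :: "('a, 'b) monoid_scheme \<Rightarrow> 'a \<Rightarrow> 'a \<Rightarrow> 'a" where
  "commutator G a b = inv\<^bsub>G\<^esub> a \<otimes>\<^bsub>G\<^esub> inv\<^bsub>G\<^esub> b \<otimes>\<^bsub>G\<^esub> a \<otimes>\<^bsub>G\<^esub> b"

definition mult_fun :: "('a, 'b) monoid_scheme \<Rightarrow> ('c \<Rightarrow> 'a) \<Rightarrow> ('c \<Rightarrow> 'a) \<Rightarrow> 'c \<Rightarrow> 'a" where
  "mult_fun G f g = (\<lambda>x. f x \<otimes>\<^bsub>G\<^esub> g x)"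

definition comm_fun :: "('a, 'b) monoid_scheme \<Rightarrow> ('c \<Rightarrow> 'a) \<Rightarrow> ('c \<Rightarrow> 'a) \<Rightarrow> 'c \<Rightarrow> 'a" where
  "comm_fun G f g = (\<lambda>x. commutator G (f x) (g x))"

context group
begin

lemma mult_inv_cancel_left: "x \<in> carrier G \<Longrightarrow> z \<in> carrier G \<Longrightarrow> x \<otimes> (inv x \<otimes> z) = z"
  by (simp add: m_assoc [symmetric])

lemma inv_mult_cancel_left: "x \<in> carrier G \<Longrightarrow> z \<in> carrier G \<Longrightarrow> inv x \<otimes> (x \<otimes> z) = z"
  by (simp add: m_assoc [symmetric])

lemma commutator_inv_eq_grp_commutator:
  "x \<in> carrier G \<Longrightarrow> y \<in> carrier G \<Longrightarrow> commutator G x y = grp_commutator G (inv x) (inv y)"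
  by (simp add: commutator_def grp_commutator_def)

lemma inv_mult_mult_eq:
  assumes "x \<in> carrier G" "y \<in> carrier G" "u \<in> carrier G" "v \<in> carrier G"
  shows "inv (x \<otimes> y) \<otimes> (u \<otimes> v) =
    ((inv x \<otimes> u) \<otimes> commutator G (inv x \<otimes> u) y) \<otimes> (inv y \<otimes> v)"
  using assms
  by (simp add: commutator_def m_assoc inv_mult_group mult_inv_cancel_left inv_mult_cancel_left)

text \<open>Every factor on the right-hand side is a commutator with an entry \<open>F\<close> or \<open>H\<close>, which will be
  a derivative and hence lie one filtration step deeper.\<close>
lemma inv_commutator_mult_eq:
  assumes "x \<in> carrier G" "y \<in> carrier G" "F \<in> carrier G" "H \<in> carrier G"
  defines "c \<equiv> commutator G"
  shows "inv (c x y) \<otimes> c (x \<otimes> F) (y \<otimes> H) =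
    (((c x H \<otimes> c (c x H) F) \<otimes> c F H) \<otimes> c ((c x H \<otimes> c (c x H) F) \<otimes> c F H) (c x y)
      \<otimes> c (c x y) H) \<otimes> ((c (c x y) F \<otimes> c (c (c x y) F) H) \<otimes> (c F y \<otimes> c (c F y) H))"
  using assms
  by (simp add: commutator_def m_assoc inv_mult_group mult_inv_cancel_left inv_mult_cancel_left)

end

locale prefiltered_group = group G for G :: "('a, 'b) monoid_scheme" (structure) +
  fixes Gs :: "nat \<Rightarrow> 'a set"
  assumes Gs_subgroup: "subgroup (Gs i) G"
    and Gs_0: "Gs 0 = carrier G"
    and Gs_Suc_subset: "Gs (Suc i) \<subseteq> Gs i"
    and commutator_in_Gs: "x \<in> Gs i \<Longrightarrow> y \<in> Gs j \<Longrightarrow> commutator G x y \<in> Gs (i + j)"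
begin

lemma Gs_antimono: "i \<le> j \<Longrightarrow> Gs j \<subseteq> Gs i"
  by (induction j rule: dec_induct) (use Gs_Suc_subset in auto)

lemma Gs_carrier: "x \<in> Gs i \<Longrightarrow> x \<in> carrier G"
  using subgroup.subset[OF Gs_subgroup] by blast

lemma Gs_one: "\<one> \<in> Gs i"
  using subgroup.one_closed[OF Gs_subgroup] .

lemma Gs_mult: "x \<in> Gs i \<Longrightarrow> y \<in> Gs i \<Longrightarrow> x \<otimes> y \<in> Gs i"
  using subgroup.m_closed[OF Gs_subgroup] .

lemma Gs_inv: "x \<in> Gs i \<Longrightarrow> inv x \<in> Gs i"
  using subgroup.m_inv_closed[OF Gs_subgroup] .

lemma conj_in_Gs: "x \<in> carrier G \<Longrightarrow> z \<in> Gs i \<Longrightarrow> x \<otimes> z \<otimes> inv x \<in> Gs i"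
proof -
  assume x: "x \<in> carrier G" and z: "z \<in> Gs i"
  have "commutator G (inv x) (inv z) \<in> Gs (0 + i)"
    using x z Gs_0 by (intro commutator_in_Gs Gs_inv) auto
  then have "commutator G (inv x) (inv z) \<otimes> z \<in> Gs i"
    using z by (simp add: Gs_mult)
  moreover have "commutator G (inv x) (inv z) \<otimes> z = x \<otimes> z \<otimes> inv x"
    using x Gs_carrier[OF z] by (simp add: commutator_def m_assoc)
  ultimately show ?thesis by simp
qed

lemma poly_upto_carrier: "poly_upto G Gs n k h \<Longrightarrow> \<alpha> \<in> FE \<Longrightarrow> h \<alpha> \<in> carrier G"
  using poly_upto_le[of G Gs n k h 0] Gs_carrier by (auto simp: poly_upto_0)

lemma poly_upto_weaken: "poly_upto G Gs n k h \<Longrightarrow> k' \<le> k \<Longrightarrow> poly_upto G Gs n k' h"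
proof -
  assume h: "poly_upto G Gs n k h" and "k' \<le> k"
  then have "Gs (k + m) \<subseteq> Gs (k' + m)" for m
    by (intro Gs_antimono) simp
  with h show ?thesis
    unfolding poly_upto_def by blast
qed

lemma poly_upto_one: "poly_upto G Gs n k (\<lambda>_. \<one>)"
  by (rule poly_upto_one[OF is_group Gs_one])

context
  fixes n :: nat
  assumes mult_n: "\<And>k f g. poly_upto G Gs n k f \<Longrightarrow> poly_upto G Gs n k g \<Longrightarrow>
      poly_upto G Gs n k (mult_fun G f g)"
    and comm_n: "\<And>i j f g. poly_upto G Gs n i f \<Longrightarrow> poly_upto G Gs n j g \<Longrightarrow>
      poly_upto G Gs n (i + j) (comm_fun G f g)"
begin

private lemma comm_n_le: "poly_upto G Gs n i f \<Longrightarrow> poly_upto G Gs n j g \<Longrightarrow> m \<le> i + j \<Longrightarrow>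
    poly_upto G Gs n m (comm_fun G f g)"
  using comm_n poly_upto_weaken by blast

private lemma mult_comm_n: "poly_upto G Gs n m u \<Longrightarrow> poly_upto G Gs n l v \<Longrightarrow>
    poly_upto G Gs n m (mult_fun G u (comm_fun G u v))"
  using mult_n comm_n_le by simp

lemma poly_upto_mult_Suc:
  assumes f: "poly_upto G Gs (Suc n) k f" and g: "poly_upto G Gs (Suc n) k g"
  shows "poly_upto G Gs (Suc n) k (mult_fun G f g)"
  unfolding poly_upto_Suc
proof (intro conjI ballI)
  fix \<alpha> assume "\<alpha> \<in> FE"
  then show "mult_fun G f g \<alpha> \<in> Gs k"
    using f g by (auto simp: poly_upto_Suc mult_fun_def intro: Gs_mult)
next
  fix \<beta> assume \<beta>: "\<beta> \<in> FE"
  define F where "F = fdiff G \<beta> f"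
  define H where "H = fdiff G \<beta> g"
  define g' where "g' = (\<lambda>\<alpha>. g (\<alpha> - \<beta>))"
  have F: "poly_upto G Gs n (Suc k) F" and H: "poly_upto G Gs n (Suc k) H"
    using f g \<beta> by (simp_all add: poly_upto_Suc F_def H_def)
  have g': "poly_upto G Gs n k g'"
    unfolding g'_def using poly_upto_le[OF g] by (simp add: poly_upto_comp_Diff)
  have "poly_upto G Gs n (Suc k) (mult_fun G (mult_fun G F (comm_fun G F g')) H)"
    by (rule mult_n[OF mult_comm_n[OF F g'] H])
  moreover have "fdiff G \<beta> (mult_fun G f g) x = mult_fun G (mult_fun G F (comm_fun G F g')) H x"
    if "x \<in> FE" for x
    using poly_upto_carrier[OF f] poly_upto_carrier[OF g] that \<beta>
    unfolding fdiff_def mult_fun_def comm_fun_def F_def H_def g'_def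
    by (intro inv_mult_mult_eq) (auto simp: FE_Diff FE_Un)
  ultimately show "poly_upto G Gs n (Suc k) (fdiff G \<beta> (mult_fun G f g))"
    by (rule poly_upto_cong)
qed

lemma poly_upto_comm_Suc:
  assumes f: "poly_upto G Gs (Suc n) i f" and g: "poly_upto G Gs (Suc n) j g"
  shows "poly_upto G Gs (Suc n) (i + j) (comm_fun G f g)"
  unfolding poly_upto_Suc
proof (intro conjI ballI)
  fix \<alpha> assume "\<alpha> \<in> FE"
  then show "comm_fun G f g \<alpha> \<in> Gs (i + j)"
    using f g by (auto simp: poly_upto_Suc comm_fun_def intro: commutator_in_Gs)
next
  fix \<beta> assume \<beta>: "\<beta> \<in> FE"
  define F where "F = fdiff G \<beta> f"
  define H where "H = fdiff G \<beta> g"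
  define f' where "f' = (\<lambda>\<alpha>. f (\<alpha> - \<beta>))"
  define g' where "g' = (\<lambda>\<alpha>. g (\<alpha> - \<beta>))"
  define z where "z = comm_fun G f' g'"
  define W where "W = mult_fun G (mult_fun G (comm_fun G f' H) (comm_fun G (comm_fun G f' H) F))
      (comm_fun G F H)"
  define X where "X = mult_fun G (mult_fun G (mult_fun G W (comm_fun G W z)) (comm_fun G z H))
      (mult_fun G (mult_fun G (comm_fun G z F) (comm_fun G (comm_fun G z F) H))
        (mult_fun G (comm_fun G F g') (comm_fun G (comm_fun G F g') H)))"
  have F: "poly_upto G Gs n (Suc i) F" and H: "poly_upto G Gs n (Suc j) H"
    using f g \<beta> by (simp_all add: poly_upto_Suc F_def H_def)
  have f': "poly_upto G Gs n i f'" and g': "poly_upto G Gs n j g'"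
    unfolding f'_def g'_def using poly_upto_le[OF f] poly_upto_le[OF g]
    by (simp_all add: poly_upto_comp_Diff)
  have z: "poly_upto G Gs n (i + j) z"
    unfolding z_def by (rule comm_n[OF f' g'])
  have W: "poly_upto G Gs n (Suc (i + j)) W"
    unfolding W_def by (intro mult_n mult_comm_n[OF comm_n_le[OF f' H] F] comm_n_le[OF F H]) simp_all
  have "poly_upto G Gs n (Suc (i + j)) X"
    unfolding X_def
    by (intro mult_n mult_comm_n[OF W z] comm_n_le[OF z H] mult_comm_n[OF comm_n_le[OF z F] H]
        mult_comm_n[OF comm_n_le[OF F g'] H]) simp_all
  moreover have "fdiff G \<beta> (comm_fun G f g) x = X x" if x: "x \<in> FE" for x
  proof -
    have c: "f (x - \<beta>) \<in> carrier G" "g (x - \<beta>) \<in> carrier G"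
        "f (x \<union> \<beta>) \<in> carrier G" "g (x \<union> \<beta>) \<in> carrier G"
      using poly_upto_carrier[OF f] poly_upto_carrier[OF g] x \<beta> FE_Diff FE_Un by auto
    note eq = inv_commutator_mult_eq[OF c(1,2) m_closed[OF inv_closed[OF c(1)] c(3)]
        m_closed[OF inv_closed[OF c(2)] c(4)]]
    show ?thesis
      using eq[unfolded mult_inv_cancel_left[OF c(1,3)] mult_inv_cancel_left[OF c(2,4)]]
      unfolding fdiff_def mult_fun_def comm_fun_def F_def H_def f'_def g'_def X_def W_def z_def .
  qed
  ultimately show "poly_upto G Gs n (Suc (i + j)) (fdiff G \<beta> (comm_fun G f g))"
    by (rule poly_upto_cong)
qed

end

lemma poly_upto_mult_and_comm:
  "(\<forall>k f g. poly_upto G Gs n k f \<longrightarrow> poly_upto G Gs n k g \<longrightarrow> poly_upto G Gs n k (mult_fun G f g)) \<and>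
   (\<forall>i j f g. poly_upto G Gs n i f \<longrightarrow> poly_upto G Gs n j g \<longrightarrow>
      poly_upto G Gs n (i + j) (comm_fun G f g))"
proof (induction n)
  case 0
  show ?case
    by (auto simp: poly_upto_0 mult_fun_def comm_fun_def intro: Gs_mult commutator_in_Gs)
next
  case (Suc n)
  then show ?case
    using poly_upto_mult_Suc[of n] poly_upto_comm_Suc[of n] by blast
qed

lemma poly_upto_mult: "poly_upto G Gs n k f \<Longrightarrow> poly_upto G Gs n k g \<Longrightarrow> poly_upto G Gs n k (mult_fun G f g)"
  using poly_upto_mult_and_comm by blast

end


section \<open>Subset products\<close>

lemma subseqs_filter: "filter (\<lambda>l. set l \<subseteq> Y) (subseqs xs) = subseqs (filter (\<lambda>a. a \<in> Y) xs)"
proof (induction xs)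
  case (Cons x xs)
  show ?case
  proof (cases "x \<in> Y")
    case True
    have "filter (\<lambda>l. set l \<subseteq> Y) (map ((#) x) (subseqs xs)) =
        map ((#) x) (filter (\<lambda>l. set l \<subseteq> Y) (subseqs xs))"
      using True by (simp add: filter_map o_def)
    then show ?thesis using True Cons by (simp add: Let_def)
  next
    case False
    have "filter (\<lambda>l. set l \<subseteq> Y) (map ((#) x) (subseqs xs)) = []"
      using False by (simp add: filter_map o_def)
    then show ?thesis using False Cons by (simp add: Let_def)
  qed
qed simp

lemma filter_sorted_list_of_set:
  assumes "finite U" "Y \<subseteq> U"
  shows "filter (\<lambda>a. a \<in> Y) (sorted_list_of_set U) = sorted_list_of_set (Y :: 'a :: linorder set)"
proof (rule sorted_distinct_set_unique)
  show "sorted (filter (\<lambda>a. a \<in> Y) (sorted_list_of_set U))"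
    using sorted_wrt_filter[of "(\<le>)" "sorted_list_of_set U"] by simp
  have "finite Y" using assms finite_subset by blast
  then show "set (filter (\<lambda>a. a \<in> Y) (sorted_list_of_set U)) = set (sorted_list_of_set Y)"
    using assms by auto
qed (use assms finite_subset in auto)

text \<open>The subsets of \<open>\<alpha>\<close> of size at most \<open>r\<close>, listed in an order compatible with restriction to
  subsets of \<open>\<alpha>\<close>, see \<open>small_subsets_filter\<close>.\<close>
definition small_subsets :: "nat \<Rightarrow> nat set \<Rightarrow> nat set list" where
  "small_subsets r \<alpha> = map set (filter (\<lambda>l. length l \<le> r) (subseqs (sorted_list_of_set \<alpha>)))"

lemma small_subsets_filter:
  assumes "finite U" "Y \<subseteq> U"
  shows "filter (\<lambda>\<beta>. \<beta> \<subseteq> Y) (small_subsets r U) = small_subsets r Y"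
proof -
  have "filter (\<lambda>\<beta>. \<beta> \<subseteq> Y) (small_subsets r U) = map set (filter (\<lambda>l. length l \<le> r)
      (filter (\<lambda>l. set l \<subseteq> Y) (subseqs (sorted_list_of_set U))))"
    unfolding small_subsets_def by (simp add: filter_map o_def conj_commute)
  also have "\<dots> = small_subsets r Y"
    unfolding small_subsets_def subseqs_filter filter_sorted_list_of_set[OF assms] ..
  finally show ?thesis .
qed

lemma distinct_small_subsets: "distinct (small_subsets r \<alpha>)"
  unfolding small_subsets_def
  by (intro distinct_map_filter distinct_set_subseqs) simp

lemma set_small_subsets:
  assumes "finite \<alpha>"
  shows "set (small_subsets r \<alpha>) = {\<beta>. \<beta> \<subseteq> \<alpha> \<and> card \<beta> \<le> r}"
proof -
  have pow: "set ` set (subseqs (sorted_list_of_set \<alpha>)) = Pow \<alpha>"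
    using subseqs_powset[of "sorted_list_of_set \<alpha>"] assms by simp
  have card: "card (set l) = length l" if "l \<in> set (subseqs (sorted_list_of_set \<alpha>))" for l
    using subseqs_distinctD[OF that] by (simp add: distinct_card)
  show ?thesis
  proof (intro equalityI subsetI)
    fix \<beta> assume "\<beta> \<in> set (small_subsets r \<alpha>)"
    then obtain l where "l \<in> set (subseqs (sorted_list_of_set \<alpha>))" "length l \<le> r" "\<beta> = set l"
      unfolding small_subsets_def by auto
    then show "\<beta> \<in> {\<beta>. \<beta> \<subseteq> \<alpha> \<and> card \<beta> \<le> r}"
      using pow card by auto
  next
    fix \<beta> assume \<beta>: "\<beta> \<in> {\<beta>. \<beta> \<subseteq> \<alpha> \<and> card \<beta> \<le> r}"
    then obtain l where "l \<in> set (subseqs (sorted_list_of_set \<alpha>))" "\<beta> = set l"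
      using pow by (metis (no_types, lifting) PowI imageE mem_Collect_eq)
    then show "\<beta> \<in> set (small_subsets r \<alpha>)"
      using \<beta> card unfolding small_subsets_def by auto
  qed
qed

definition subset_prod :: "('a, 'b) monoid_scheme \<Rightarrow> nat \<Rightarrow> (nat set \<Rightarrow> 'a) \<Rightarrow> nat set \<Rightarrow> 'a" where
  "subset_prod G r e \<alpha> = foldr (\<lambda>\<beta> acc. e \<beta> \<otimes>\<^bsub>G\<^esub> acc) (small_subsets r \<alpha>) \<one>\<^bsub>G\<^esub>"

context group
begin

lemma foldr_in_subgroup:
  "subgroup S G \<Longrightarrow> (\<And>x. x \<in> set xs \<Longrightarrow> f x \<in> S) \<Longrightarrow> foldr (\<lambda>x acc. f x \<otimes> acc) xs \<one> \<in> S"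
  by (induction xs) (auto intro: subgroup.m_closed subgroup.one_closed)

lemma foldr_if_one:
  "(\<And>x. x \<in> set xs \<Longrightarrow> f x \<in> carrier G) \<Longrightarrow>
   foldr (\<lambda>x acc. (if P x then f x else \<one>) \<otimes> acc) xs \<one> = foldr (\<lambda>x acc. f x \<otimes> acc) (filter P xs) \<one>"
proof (induction xs)
  case (Cons a xs)
  have "foldr (\<lambda>x acc. f x \<otimes> acc) (filter P xs) \<one> \<in> carrier G"
    using Cons.prems by (intro foldr_in_subgroup[OF subgroup_self]) auto
  then show ?case using Cons by auto
qed simp

lemma subset_prod_in_subgroup: "subgroup S G \<Longrightarrow> (\<And>\<beta>. e \<beta> \<in> S) \<Longrightarrow> subset_prod G r e \<alpha> \<in> S"
  unfolding subset_prod_def by (rule foldr_in_subgroup)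

end

context prefiltered_group
begin

definition monomial :: "nat set \<Rightarrow> 'a \<Rightarrow> nat set \<Rightarrow> 'a" where
  "monomial \<beta> c = (\<lambda>\<alpha>. if \<beta> \<subseteq> \<alpha> then c else \<one>)"

lemma fdiff_monomial:
  assumes "c \<in> carrier G"
  shows "fdiff G \<beta>' (monomial \<beta> c) = (if \<beta> \<inter> \<beta>' = {} then (\<lambda>_. \<one>) else monomial (\<beta> - \<beta>') c)"
proof (cases "\<beta> \<inter> \<beta>' = {}")
  case True
  then have "(\<beta> \<subseteq> \<alpha> - \<beta>') = (\<beta> \<subseteq> \<alpha> \<union> \<beta>')" for \<alpha>
    by blast
  then show ?thesis
    using True assms by (simp add: fdiff_def monomial_def fun_eq_iff)
next
  case False
  then have "\<not> \<beta> \<subseteq> \<alpha> - \<beta>'" "(\<beta> \<subseteq> \<alpha> \<union> \<beta>') = (\<beta> - \<beta>' \<subseteq> \<alpha>)" for \<alpha>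
    by blast+
  then show ?thesis
    using False assms by (simp add: fdiff_def monomial_def fun_eq_iff)
qed

lemma poly_upto_monomial: "finite \<beta> \<Longrightarrow> c \<in> Gs (k + card \<beta>) \<Longrightarrow> poly_upto G Gs n k (monomial \<beta> c)"
proof (induction n arbitrary: \<beta> k)
  case 0
  have "c \<in> Gs k" using 0 Gs_antimono[of k "k + card \<beta>"] by auto
  then show ?case by (auto simp: poly_upto_0 monomial_def Gs_one)
next
  case (Suc n)
  have ck: "c \<in> Gs k"
    using Suc.prems Gs_antimono[of k "k + card \<beta>"] by auto
  show ?case
    unfolding poly_upto_Suc
  proof (intro conjI ballI)
    fix \<alpha> show "monomial \<beta> c \<alpha> \<in> Gs k"
      using ck by (auto simp: monomial_def Gs_one)
  next
    fix \<beta>' assume "\<beta>' \<in> FE"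
    show "poly_upto G Gs n (Suc k) (fdiff G \<beta>' (monomial \<beta> c))"
    proof (cases "\<beta> \<inter> \<beta>' = {}")
      case True
      then show ?thesis using fdiff_monomial[OF Gs_carrier[OF ck]] poly_upto_one by simp
    next
      case False
      have "card (\<beta> - \<beta>') < card \<beta>"
        using False Suc.prems(1) by (intro psubset_card_mono) auto
      then have "c \<in> Gs (Suc k + card (\<beta> - \<beta>'))"
        using Suc.prems(2) Gs_antimono[of "Suc k + card (\<beta> - \<beta>')" "k + card \<beta>"] by auto
      then have "poly_upto G Gs n (Suc k) (monomial (\<beta> - \<beta>') c)"
        using Suc.prems(1) by (intro Suc.IH) auto
      then show ?thesis using fdiff_monomial[OF Gs_carrier[OF ck]] False by simp
    qed
  qed
qed

lemma poly_upto_foldr_monomials: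
  assumes "\<And>\<beta>. \<beta> \<in> set L \<Longrightarrow> finite \<beta> \<and> e \<beta> \<in> Gs (card \<beta>)"
  shows "poly_upto G Gs n 0 (\<lambda>\<alpha>. foldr (\<lambda>\<beta> acc. monomial \<beta> (e \<beta>) \<alpha> \<otimes> acc) L \<one>)"
  using assms
proof (induction L)
  case Nil
  then show ?case using poly_upto_one by simp
next
  case (Cons \<beta> L)
  then have "poly_upto G Gs n 0 (mult_fun G (monomial \<beta> (e \<beta>))
      (\<lambda>\<alpha>. foldr (\<lambda>\<beta> acc. monomial \<beta> (e \<beta>) \<alpha> \<otimes> acc) L \<one>))"
    by (intro poly_upto_mult poly_upto_monomial) auto
  then show ?case
    by (simp add: mult_fun_def)
qed

text \<open>Infinitely many \<open>e \<beta>\<close> enter \<open>subset_prod G r e\<close>, but only finitely many are seen by a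
  single derivative; there it agrees with a finite product of monomials.\<close>
lemma poly_upto_subset_prod:
  assumes e: "\<And>\<beta>. finite \<beta> \<Longrightarrow> card \<beta> \<le> r \<Longrightarrow> e \<beta> \<in> Gs (card \<beta>)"
  shows "poly_upto G Gs n 0 (subset_prod G r e)"
proof (rule poly_upto_local)
  fix \<beta>s \<alpha> assume \<beta>s: "set \<beta>s \<subseteq> FE" and \<alpha>: "\<alpha> \<in> FE"
  define U where "U = \<alpha> \<union> \<Union>(set \<beta>s)"
  have U: "finite U"
    unfolding U_def using \<beta>s \<alpha> by (auto simp: FE_def)
  have small: "finite \<beta> \<and> card \<beta> \<le> r" if "\<beta> \<in> set (small_subsets r U)" for \<beta>
    using that set_small_subsets[OF U] U finite_subset by auto
  define h where "h = (\<lambda>\<alpha>. foldr (\<lambda>\<beta> acc. monomial \<beta> (e \<beta>) \<alpha> \<otimes> acc) (small_subsets r U) \<one>)"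
  have "poly_upto G Gs n 0 h"
    unfolding h_def using small e by (intro poly_upto_foldr_monomials) blast
  moreover have "subset_prod G r e y = h y" if "y \<subseteq> U" for y
  proof -
    have "e \<beta> \<in> carrier G" if "\<beta> \<in> set (small_subsets r U)" for \<beta>
      using small[OF that] e Gs_carrier by blast
    then have "h y = foldr (\<lambda>\<beta> acc. e \<beta> \<otimes> acc) (filter (\<lambda>\<beta>. \<beta> \<subseteq> y) (small_subsets r U)) \<one>"
      unfolding h_def monomial_def by (rule foldr_if_one)
    then show ?thesis
      unfolding subset_prod_def small_subsets_filter[OF U that] by simp
  qed
  ultimately show "\<exists>h. poly_upto G Gs n 0 h \<and> (\<forall>y. y \<subseteq> \<alpha> \<union> \<Union>(set \<beta>s) \<longrightarrow> subset_prod G r e y = h y)"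
    unfolding U_def by blast
qed

end

section \<open>Moebius inversion on the subset lattice\<close>

text \<open>The iterated difference of \<open>\<phi>\<close> at \<open>x\<close> along the elements of \<open>S\<close>.\<close>
definition mobius_coeff :: "('a, 'b) monoid_scheme \<Rightarrow> (nat set \<Rightarrow> 'a) \<Rightarrow> nat set \<Rightarrow> nat set \<Rightarrow> 'a" where
  "mobius_coeff G \<phi> S x = finprod G (\<lambda>T. \<phi> (x \<union> T) [^]\<^bsub>G\<^esub> ((-1::int) ^ card (S - T))) (Pow S)"

context comm_group
begin

lemma finprod_inv: "f \<in> A \<rightarrow> carrier G \<Longrightarrow> finprod G (\<lambda>x. inv (f x)) A = inv (finprod G f A)"
proof (induction A rule: infinite_finite_induct)
  case (insert a A)
  then have "finprod G (\<lambda>x. inv (f x)) (insert a A) = inv (f a) \<otimes> inv (finprod G f A)"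
    by (simp add: finprod_insert Pi_iff)
  also have "\<dots> = inv (finprod G f (insert a A))"
    using insert by (simp add: finprod_insert Pi_iff inv_mult)
  finally show ?case .
qed simp_all

lemma finprod_in_subgroup:
  assumes "subgroup B G" "\<And>a. a \<in> A \<Longrightarrow> f a \<in> B"
  shows "finprod G f A \<in> B"
proof (cases "finite A")
  case True
  then show ?thesis
    using assms(2)
  proof (induction A rule: finite_induct)
    case (insert a A)
    then have "f \<in> A \<rightarrow> carrier G" "f a \<in> carrier G"
      using subgroup.subset[OF assms(1)] by auto
    then show ?case
      using insert by (simp add: finprod_insert subgroup.m_closed[OF assms(1)])
  qed (simp add: subgroup.one_closed[OF assms(1)])
qed (simp add: subgroup.one_closed[OF assms(1)])

lemma foldr_eq_finprod:
  "distinct xs \<Longrightarrow> (\<And>x. x \<in> set xs \<Longrightarrow> f x \<in> carrier G) \<Longrightarrow>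
   foldr (\<lambda>x acc. f x \<otimes> acc) xs \<one> = finprod G f (set xs)"
  by (induction xs) (simp_all add: Pi_iff)

lemma mobius_coeff_closed: "\<phi> \<in> UNIV \<rightarrow> carrier G \<Longrightarrow> mobius_coeff G \<phi> S x \<in> carrier G"
  unfolding mobius_coeff_def by (intro finprod_closed) auto

lemma mobius_coeff_empty: "\<phi> \<in> UNIV \<rightarrow> carrier G \<Longrightarrow> mobius_coeff G \<phi> {} x = \<phi> x"
proof -
  assume "\<phi> \<in> UNIV \<rightarrow> carrier G"
  then have "\<phi> x \<in> carrier G" by auto
  then show ?thesis by (simp add: mobius_coeff_def)
qed

lemma mobius_coeff_insert:
  assumes phi: "\<phi> \<in> UNIV \<rightarrow> carrier G" and S: "finite S" "a \<notin> S"
  shows "mobius_coeff G \<phi> (insert a S) x =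
    inv (mobius_coeff G \<phi> S x) \<otimes> mobius_coeff G \<phi> S (insert a x)"
proof -
  define f where "f = (\<lambda>T. \<phi> (x \<union> T) [^] ((-1::int) ^ card (insert a S - T)))"
  have f: "f \<in> B \<rightarrow> carrier G" for B
    unfolding f_def using phi by auto
  have "mobius_coeff G \<phi> (insert a S) x = finprod G f (Pow S \<union> insert a ` Pow S)"
    unfolding mobius_coeff_def f_def Pow_insert ..
  also have "\<dots> = finprod G f (Pow S) \<otimes> finprod G f (insert a ` Pow S)"
    using S f by (intro finprod_Un_disjoint) auto
  also have "finprod G f (Pow S) = inv (mobius_coeff G \<phi> S x)"
  proof -
    have "finprod G f (Pow S) = finprod G (\<lambda>T. inv (\<phi> (x \<union> T) [^] ((-1::int) ^ card (S - T)))) (Pow S)"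
    proof (rule finprod_cong')
      fix T assume T: "T \<in> Pow S"
      then have "insert a S - T = insert a (S - T)" "a \<notin> S - T"
        using S by auto
      then have "(-1::int) ^ card (insert a S - T) = - ((-1) ^ card (S - T))"
        using S by simp
      moreover have "\<phi> (x \<union> T) \<in> carrier G"
        using phi by auto
      ultimately show "f T = inv (\<phi> (x \<union> T) [^] ((-1::int) ^ card (S - T)))"
        unfolding f_def by (simp add: int_pow_neg)
    qed (use phi in auto)
    also have "\<dots> = inv (mobius_coeff G \<phi> S x)"
      unfolding mobius_coeff_def using phi by (intro finprod_inv) auto
    finally show ?thesis .
  qed
  also have "finprod G f (insert a ` Pow S) = mobius_coeff G \<phi> S (insert a x)"
  proof -
    have "inj_on (insert a) (Pow S)"
      using S by (auto simp: inj_on_def)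
    then have "finprod G f (insert a ` Pow S) = finprod G (\<lambda>T. f (insert a T)) (Pow S)"
      using f by (intro finprod_reindex) auto
    also have "\<dots> = mobius_coeff G \<phi> S (insert a x)"
      unfolding mobius_coeff_def
    proof (rule finprod_cong')
      fix T assume "T \<in> Pow S"
      then have "insert a S - insert a T = S - T" "x \<union> insert a T = insert a x \<union> T"
        using S by auto
      then show "f (insert a T) = \<phi> (insert a x \<union> T) [^] ((-1::int) ^ card (S - T))"
        unfolding f_def by simp
    qed (use phi in auto)
    finally show ?thesis .
  qed
  finally show ?thesis .
qed

lemma mobius_coeff_diff:
  assumes phi: "\<phi> \<in> UNIV \<rightarrow> carrier G" and S: "finite S"
    and psi: "\<And>T. T \<subseteq> S \<Longrightarrow> \<psi> (x \<union> T) = inv (\<phi> (x \<union> T)) \<otimes> \<phi> (insert a x \<union> T)"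
  shows "mobius_coeff G \<psi> S x = inv (mobius_coeff G \<phi> S x) \<otimes> mobius_coeff G \<phi> S (insert a x)"
proof -
  define e where "e T = (-1::int) ^ card (S - T)" for T
  have "mobius_coeff G \<psi> S x =
      finprod G (\<lambda>T. inv (\<phi> (x \<union> T) [^] e T) \<otimes> \<phi> (insert a x \<union> T) [^] e T) (Pow S)"
    unfolding mobius_coeff_def e_def[symmetric]
  proof (rule finprod_cong')
    fix T assume "T \<in> Pow S"
    moreover have "\<phi> (x \<union> T) \<in> carrier G" "\<phi> (insert a x \<union> T) \<in> carrier G"
      using phi by auto
    ultimately show "\<psi> (x \<union> T) [^] e T = inv (\<phi> (x \<union> T) [^] e T) \<otimes> \<phi> (insert a x \<union> T) [^] e T"
      using psi by (simp add: int_pow_distrib int_pow_inv)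
  qed (use phi in \<open>auto simp: Pi_iff\<close>)
  also have "\<dots> = finprod G (\<lambda>T. inv (\<phi> (x \<union> T) [^] e T)) (Pow S) \<otimes> mobius_coeff G \<phi> S (insert a x)"
    unfolding mobius_coeff_def e_def using phi by (intro finprod_multf) auto
  also have "finprod G (\<lambda>T. inv (\<phi> (x \<union> T) [^] e T)) (Pow S) = inv (mobius_coeff G \<phi> S x)"
    unfolding mobius_coeff_def e_def using phi by (intro finprod_inv) auto
  finally show ?thesis .
qed

lemma mobius_inversion:
  assumes phi: "\<phi> \<in> UNIV \<rightarrow> carrier G" and R: "finite R"
  shows "\<phi> (x \<union> R) = finprod G (\<lambda>S. mobius_coeff G \<phi> S x) (Pow R)"
  using R
proof (induction R arbitrary: x rule: finite_induct)
  case empty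
  have "finprod G (\<lambda>S. mobius_coeff G \<phi> S x) (Pow {}) = mobius_coeff G \<phi> {} x"
    using mobius_coeff_closed[OF phi] by simp
  then show ?case
    using mobius_coeff_empty[OF phi] by simp
next
  case (insert a R)
  define c where "c y S = mobius_coeff G \<phi> S y" for y S
  have c: "c y \<in> B \<rightarrow> carrier G" for y B
    unfolding c_def using mobius_coeff_closed[OF phi] by auto
  have "inj_on (insert a) (Pow R)"
    using insert by (auto simp: inj_on_def) (metis Diff_insert_absorb subsetD)+
  moreover have "Pow R \<inter> insert a ` Pow R = {}"
    using insert by auto
  ultimately have "finprod G (c x) (Pow (insert a R)) =
      finprod G (c x) (Pow R) \<otimes> finprod G (\<lambda>S. c x (insert a S)) (Pow R)"
    unfolding Pow_insert using insert c by (simp add: finprod_Un_disjoint finprod_reindex)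
  also have "finprod G (\<lambda>S. c x (insert a S)) (Pow R) =
      finprod G (\<lambda>S. inv (c x S) \<otimes> c (insert a x) S) (Pow R)"
  proof (rule finprod_cong')
    fix S assume "S \<in> Pow R"
    then have "finite S" "a \<notin> S"
      using insert finite_subset by auto
    then show "c x (insert a S) = inv (c x S) \<otimes> c (insert a x) S"
      unfolding c_def by (rule mobius_coeff_insert[OF phi])
  qed (use c in \<open>auto intro!: m_closed\<close>)
  also have "\<dots> = inv (finprod G (c x) (Pow R)) \<otimes> finprod G (c (insert a x)) (Pow R)"
    using c finprod_inv[OF c] by (subst finprod_multf) auto
  finally have "finprod G (c x) (Pow (insert a R)) = finprod G (c (insert a x)) (Pow R)"
    using c by (simp add: m_assoc[symmetric])
  then show ?case
    using insert.IH[of "insert a x"] by (simp add: c_def[abs_def])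
qed

end


section \<open>Correcting a polynomial map by lattice-valued polynomial maps\<close>

context prefiltered_group
begin

lemma abelian_layer:
  assumes "1 \<le> r"
  obtains Q :: "'a set monoid" and \<pi> where "comm_group Q"
    "\<And>a. a \<in> Gs r \<Longrightarrow> \<pi> a \<in> carrier Q"
    "\<And>a b. a \<in> Gs r \<Longrightarrow> b \<in> Gs r \<Longrightarrow> \<pi> (a \<otimes> b) = \<pi> a \<otimes>\<^bsub>Q\<^esub> \<pi> b"
    "\<And>a. a \<in> Gs r \<Longrightarrow> \<pi> a = \<one>\<^bsub>Q\<^esub> \<longleftrightarrow> a \<in> Gs (Suc r)"
proof -
  define H where "H = G\<lparr>carrier := Gs r\<rparr>"
  define K where "K = Gs (Suc r)"
  define \<pi> where "\<pi> = (\<lambda>a. K #>\<^bsub>H\<^esub> a)"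
  have H: "group H"
    unfolding H_def by (rule subgroup_imp_group[OF Gs_subgroup])
  have K: "subgroup K H"
    unfolding H_def K_def by (rule subgroup_incl[OF Gs_subgroup Gs_subgroup Gs_Suc_subset])
  have inv_H: "inv\<^bsub>H\<^esub> a = inv a" if "a \<in> Gs r" for a
    unfolding H_def by (rule m_inv_consistent[OF Gs_subgroup that])
  have "K \<lhd> H"
    unfolding group.normal_inv_iff[OF H]
  proof (intro conjI ballI K)
    fix x h assume "x \<in> carrier H" "h \<in> K"
    then show "x \<otimes>\<^bsub>H\<^esub> h \<otimes>\<^bsub>H\<^esub> inv\<^bsub>H\<^esub> x \<in> K"
      using conj_in_Gs[OF Gs_carrier] inv_H by (simp add: H_def K_def)
  qed
  then interpret K: normal K H .
  interpret \<pi>: group_hom H "H Mod K" \<pi>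
    unfolding \<pi>_def
    by (intro group_hom.intro group_hom_axioms.intro H K.factorgroup_is_group K.r_coset_hom_Mod)
  have mult: "\<pi> (a \<otimes> b) = \<pi> a \<otimes>\<^bsub>H Mod K\<^esub> \<pi> b" if "a \<in> Gs r" "b \<in> Gs r" for a b
    using \<pi>.hom_mult[of a b] that by (simp add: H_def)
  have closed: "\<pi> a \<in> carrier (H Mod K)" if "a \<in> Gs r" for a
    using \<pi>.hom_closed[of a] that by (simp add: H_def)
  have one_iff: "\<pi> a = \<one>\<^bsub>H Mod K\<^esub> \<longleftrightarrow> a \<in> K" if "a \<in> Gs r" for a
  proof
    assume "\<pi> a = \<one>\<^bsub>H Mod K\<^esub>"
    moreover have "a \<in> K #>\<^bsub>H\<^esub> a"
      using group.rcos_self[OF H _ K] that by (simp add: H_def)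
    ultimately show "a \<in> K"
      by (simp add: \<pi>_def)
  qed (simp add: \<pi>_def subgroup.rcos_const[OF K H])
  have "comm_group (H Mod K)"
  proof (rule group.group_comm_groupI[OF K.factorgroup_is_group])
    fix x y assume "x \<in> carrier (H Mod K)" "y \<in> carrier (H Mod K)"
    then obtain a b where a: "a \<in> Gs r" "x = \<pi> a" and b: "b \<in> Gs r" "y = \<pi> b"
      unfolding carrier_FactGroup \<pi>_def by (auto simp: H_def)
    have "commutator G (inv a) (inv b) \<in> Gs (r + r)"
      using a b by (intro commutator_in_Gs Gs_inv)
    moreover have "Gs (r + r) \<subseteq> K"
      unfolding K_def using assms by (intro Gs_antimono) simp
    ultimately have k: "commutator G (inv a) (inv b) \<in> K"
      by blast
    have kr: "commutator G (inv a) (inv b) \<in> Gs r"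
      using k Gs_Suc_subset by (auto simp: K_def)
    have "a \<otimes> b = commutator G (inv a) (inv b) \<otimes> (b \<otimes> a)"
      using Gs_carrier[OF a(1)] Gs_carrier[OF b(1)]
      by (simp add: commutator_def m_assoc mult_inv_cancel_left inv_mult_cancel_left)
    then have "\<pi> (a \<otimes> b) = \<pi> (commutator G (inv a) (inv b)) \<otimes>\<^bsub>H Mod K\<^esub> \<pi> (b \<otimes> a)"
      using mult[OF kr Gs_mult[OF b(1) a(1)]] by simp
    then have "x \<otimes>\<^bsub>H Mod K\<^esub> y = \<pi> (commutator G (inv a) (inv b)) \<otimes>\<^bsub>H Mod K\<^esub> \<pi> (b \<otimes> a)"
      using mult[OF a(1) b(1)] a(2) b(2) by simp
    also have "\<dots> = \<pi> (b \<otimes> a)"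
      unfolding one_iff[OF kr, THEN iffD2, OF k]
      by (rule monoid.l_one[OF group.is_monoid[OF K.factorgroup_is_group] closed[OF Gs_mult[OF b(1) a(1)]]])
    also have "\<dots> = y \<otimes>\<^bsub>H Mod K\<^esub> x"
      using a b by (simp add: mult)
    finally show "x \<otimes>\<^bsub>H Mod K\<^esub> y = y \<otimes>\<^bsub>H Mod K\<^esub> x" .
  qed
  then show ?thesis
    using that[of "H Mod K" \<pi>] closed mult one_iff by (simp add: K_def)
qed

end

locale prefiltration_lattice = prefiltered_group +
  fixes \<Gamma> :: "'a set"
  assumes \<Gamma>_subgroup: "subgroup \<Gamma> G"

text \<open>\<open>\<pi>\<close> stands for the projection \<open>Gs r \<rightarrow> Gs r / Gs (Suc r)\<close>: only its kernel and the
  commutativity of its target are used.\<close>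
locale layer_projection = prefiltration_lattice G Gs \<Gamma> + Q: comm_group Q
  for G :: "('a, 'b) monoid_scheme" (structure) and Gs \<Gamma> and Q :: "('c, 'd) monoid_scheme" +
  fixes r :: nat and \<pi> :: "'a \<Rightarrow> 'c"
  assumes proj_closed: "a \<in> Gs r \<Longrightarrow> \<pi> a \<in> carrier Q"
    and proj_mult: "a \<in> Gs r \<Longrightarrow> b \<in> Gs r \<Longrightarrow> \<pi> (a \<otimes> b) = \<pi> a \<otimes>\<^bsub>Q\<^esub> \<pi> b"
    and proj_eq_one_iff: "a \<in> Gs r \<Longrightarrow> \<pi> a = \<one>\<^bsub>Q\<^esub> \<longleftrightarrow> a \<in> Gs (Suc r)"
begin

lemma proj_one: "\<pi> \<one> = \<one>\<^bsub>Q\<^esub>"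
  using proj_eq_one_iff Gs_one by blast

lemma proj_inv: "a \<in> Gs r \<Longrightarrow> \<pi> (inv a) = inv\<^bsub>Q\<^esub> (\<pi> a)"
  using proj_mult[of "inv a" a] proj_one proj_closed Gs_inv Gs_carrier
  by (intro Q.inv_equality[symmetric]) auto

lemma proj_subset_prod:
  assumes "\<And>\<beta>. e \<beta> \<in> Gs r" "finite \<alpha>"
  shows "\<pi> (subset_prod G r e \<alpha>) = finprod Q (\<lambda>\<beta>. \<pi> (e \<beta>)) {\<beta>. \<beta> \<subseteq> \<alpha> \<and> card \<beta> \<le> r}"
proof -
  have "\<pi> (foldr (\<lambda>\<beta> acc. e \<beta> \<otimes> acc) xs \<one>) = foldr (\<lambda>\<beta> acc. \<pi> (e \<beta>) \<otimes>\<^bsub>Q\<^esub> acc) xs \<one>\<^bsub>Q\<^esub>" for xs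
  proof (induction xs)
    case (Cons \<beta> xs)
    have "foldr (\<lambda>\<beta> acc. e \<beta> \<otimes> acc) xs \<one> \<in> Gs r"
      using assms(1) by (intro foldr_in_subgroup[OF Gs_subgroup])
    then show ?case
      using Cons assms(1) proj_mult by simp
  qed (simp add: proj_one)
  also have "foldr (\<lambda>\<beta> acc. \<pi> (e \<beta>) \<otimes>\<^bsub>Q\<^esub> acc) (small_subsets r \<alpha>) \<one>\<^bsub>Q\<^esub> =
      finprod Q (\<lambda>\<beta>. \<pi> (e \<beta>)) (set (small_subsets r \<alpha>))"
    by (rule Q.foldr_eq_finprod[OF distinct_small_subsets]) (use assms(1) proj_closed in blast)
  finally show ?thesis
    unfolding subset_prod_def set_small_subsets[OF assms(2)] .
qed

text \<open>Outside \<open>FE\<close> the projected map is set to \<open>\<one>\<close>, so that Moebius inversion applies to all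
  sets.\<close>
definition proj_map :: "(nat set \<Rightarrow> 'a) \<Rightarrow> nat set \<Rightarrow> 'c" where
  "proj_map h y = (if y \<in> FE then \<pi> (h y) else \<one>\<^bsub>Q\<^esub>)"

definition proj_coeff :: "(nat set \<Rightarrow> 'a) \<Rightarrow> nat set \<Rightarrow> 'c" where
  "proj_coeff h \<beta> = mobius_coeff Q (proj_map h) \<beta> {}"

lemma proj_map_closed: "\<forall>y\<in>FE. h y \<in> Gs r \<Longrightarrow> proj_map h \<in> UNIV \<rightarrow> carrier Q"
  unfolding proj_map_def using proj_closed by auto

lemma proj_eq_finprod_coeff:
  assumes "\<forall>y\<in>FE. h y \<in> Gs r" "\<alpha> \<in> FE"
  shows "\<pi> (h \<alpha>) = finprod Q (proj_coeff h) (Pow \<alpha>)"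
proof -
  have "\<pi> (h \<alpha>) = proj_map h ({} \<union> \<alpha>)"
    using assms(2) by (simp add: proj_map_def)
  also have "\<dots> = finprod Q (\<lambda>S. mobius_coeff Q (proj_map h) S {}) (Pow \<alpha>)"
    using assms(2) by (intro Q.mobius_inversion[OF proj_map_closed[OF assms(1)]]) (simp add: FE_def)
  finally show ?thesis
    unfolding proj_coeff_def[abs_def] .
qed

lemma proj_fdiffs_singletons:
  assumes "distinct as" "0 \<notin> set as" "x \<in> FE" "x \<inter> set as = {}" "\<forall>y\<in>FE. h y \<in> Gs r"
  shows "\<pi> (fdiffs G (map (\<lambda>a. {a}) as) h x) = mobius_coeff Q (proj_map h) (set as) x"
  using assms
proof (induction as arbitrary: h)
  case Nil
  have "mobius_coeff Q (proj_map h) {} x = proj_map h x"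
    by (rule Q.mobius_coeff_empty[OF proj_map_closed[OF Nil.prems(5)]])
  then show ?case
    using Nil.prems(3) by (simp add: proj_map_def[of h x])
next
  case (Cons a as)
  define h' where "h' = fdiff G {a} h"
  have a: "{a} \<in> FE" "a \<notin> set as"
    using Cons.prems(1,2) by (simp_all add: FE_def)
  have h': "\<forall>y\<in>FE. h' y \<in> Gs r"
    using Cons.prems(5) FE_Diff FE_Un[OF _ a(1)] by (simp add: h'_def fdiff_def Gs_mult Gs_inv)
  have "\<pi> (fdiffs G (map (\<lambda>a. {a}) as) h' x) = mobius_coeff Q (proj_map h') (set as) x"
    using Cons.prems h' by (intro Cons.IH) auto
  also have "\<dots> = inv\<^bsub>Q\<^esub> (mobius_coeff Q (proj_map h) (set as) x) \<otimes>\<^bsub>Q\<^esub>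
      mobius_coeff Q (proj_map h) (set as) (insert a x)"
  proof (rule Q.mobius_coeff_diff[OF proj_map_closed[OF Cons.prems(5)] finite_set])
    fix T assume T: "T \<subseteq> set as"
    then have FE: "x \<union> T \<in> FE" "insert a x \<union> T \<in> FE"
      using Cons.prems(2,3) finite_subset by (auto simp: FE_def)
    moreover have "x \<union> T - {a} = x \<union> T" "x \<union> T \<union> {a} = insert a x \<union> T"
      using Cons.prems(4) T a(2) by auto
    ultimately show "proj_map h' (x \<union> T) =
        inv\<^bsub>Q\<^esub> (proj_map h (x \<union> T)) \<otimes>\<^bsub>Q\<^esub> proj_map h (insert a x \<union> T)"
      using Cons.prems(5) by (simp add: proj_map_def h'_def fdiff_def proj_mult proj_inv Gs_inv)
  qed
  also have "\<dots> = mobius_coeff Q (proj_map h) (insert a (set as)) x"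
    by (rule Q.mobius_coeff_insert[OF proj_map_closed[OF Cons.prems(5)] finite_set a(2), symmetric])
  finally show ?case
    by (simp add: h'_def)
qed

text \<open>The coefficient is the projection of a derivative of order \<open>card \<beta>\<close>, see
  \<open>proj_fdiffs_singletons\<close>, hence trivial once \<open>card \<beta> > r\<close>.\<close>
lemma proj_coeff_eq_one:
  assumes "\<forall>y\<in>FE. h y \<in> Gs r" "poly_upto G Gs (card \<beta>) 0 h" "\<beta> \<in> FE" "r < card \<beta>"
  shows "proj_coeff h \<beta> = \<one>\<^bsub>Q\<^esub>"
proof -
  define as where "as = sorted_list_of_set \<beta>"
  have as: "distinct as" "set as = \<beta>" "length as = card \<beta>" "0 \<notin> set as"
    using assms(3) by (auto simp: as_def FE_def)
  have "set (map (\<lambda>a. {a}) as) \<subseteq> FE"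
    using as(4) by (auto simp: FE_def)
  then have "fdiffs G (map (\<lambda>a. {a}) as) h {} \<in> Gs (0 + length (map (\<lambda>a. {a}) as))"
    using assms(2)[unfolded poly_upto_def, rule_format, of "map (\<lambda>a. {a}) as" "{}"] empty_in_FE as(3)
    by simp
  moreover have "Gs (card \<beta>) \<subseteq> Gs (Suc r)"
    using assms(4) by (intro Gs_antimono) simp
  ultimately have "fdiffs G (map (\<lambda>a. {a}) as) h {} \<in> Gs (Suc r)"
    using as by auto
  moreover have "proj_coeff h \<beta> = \<pi> (fdiffs G (map (\<lambda>a. {a}) as) h {})"
    using proj_fdiffs_singletons[of as "{}" h] as assms(1) empty_in_FE by (simp add: proj_coeff_def)
  ultimately show ?thesis
    using proj_eq_one_iff Gs_Suc_subset by auto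
qed

lemma proj_coeff_in_proj_lattice:
  assumes "\<forall>y\<in>FE. h y \<in> Gs r" "\<forall>y\<in>FE. \<exists>x\<in>Gs (Suc r). \<exists>c\<in>\<Gamma>. h y = x \<otimes> c"
  shows "proj_coeff h \<beta> \<in> \<pi> ` (\<Gamma> \<inter> Gs r)"
proof -
  have "group_hom (G\<lparr>carrier := Gs r\<rparr>) Q \<pi>"
    using subgroup_imp_group[OF Gs_subgroup] Q.is_group proj_closed proj_mult
    by (intro group_hom.intro group_hom_axioms.intro) (auto simp: hom_def)
  then have B: "subgroup (\<pi> ` (\<Gamma> \<inter> Gs r)) Q"
    by (rule group_hom.subgroup_img_is_subgroup)
      (rule subgroup_incl[OF subgroups_Inter_pair[OF \<Gamma>_subgroup Gs_subgroup] Gs_subgroup], blast)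
  have "proj_map h y \<in> \<pi> ` (\<Gamma> \<inter> Gs r)" for y
  proof (cases "y \<in> FE")
    case True
    then obtain x c where x: "x \<in> Gs (Suc r)" and c: "c \<in> \<Gamma>" and hy: "h y = x \<otimes> c"
      using assms(2) by blast
    have xr: "x \<in> Gs r"
      using x Gs_Suc_subset by blast
    have "c = inv x \<otimes> h y"
      using hy Gs_carrier[OF xr] subgroup.mem_carrier[OF \<Gamma>_subgroup c] by (simp add: inv_mult_cancel_left)
    then have cr: "c \<in> Gs r"
      using xr assms(1) True by (simp add: Gs_mult Gs_inv)
    have "proj_map h y = \<pi> c"
      using True hy proj_mult[OF xr cr] proj_eq_one_iff[OF xr] x proj_closed[OF cr]
      by (simp add: proj_map_def)
    then show ?thesis
      using c cr by blast
  qed (simp add: proj_map_def subgroup.one_closed[OF B])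
  then show ?thesis
    unfolding proj_coeff_def mobius_coeff_def
    by (intro Q.finprod_in_subgroup[OF B] group.subgroup_int_pow_closed[OF Q.is_group B])
qed

lemma layer_correction:
  assumes g: "\<And>n. poly_upto G Gs n 0 g" "\<forall>\<alpha>\<in>FE. g \<alpha> \<in> Gs r"
    "\<forall>\<alpha>\<in>FE. \<exists>x\<in>Gs (Suc r). \<exists>c\<in>\<Gamma>. g \<alpha> = x \<otimes> c"
  shows "\<exists>\<gamma>. (\<forall>\<alpha>\<in>FE. \<gamma> \<alpha> \<in> \<Gamma>) \<and> (\<forall>n. poly_upto G Gs n 0 \<gamma>) \<and> (\<forall>\<alpha>\<in>FE. g \<alpha> \<otimes> \<gamma> \<alpha> \<in> Gs (Suc r))"
proof -
  have "\<exists>d. d \<in> \<Gamma> \<inter> Gs r \<and> \<pi> d = inv\<^bsub>Q\<^esub> (proj_coeff g \<beta>)" for \<beta>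
  proof -
    obtain d where d: "d \<in> \<Gamma> \<inter> Gs r" "proj_coeff g \<beta> = \<pi> d"
      using proj_coeff_in_proj_lattice[OF g(2,3), of \<beta>] by (rule imageE)
    show ?thesis
    proof (intro exI conjI)
      show "inv d \<in> \<Gamma> \<inter> Gs r"
        using d(1) subgroup.m_inv_closed[OF \<Gamma>_subgroup] Gs_inv by simp
      show "\<pi> (inv d) = inv\<^bsub>Q\<^esub> (proj_coeff g \<beta>)"
        using d proj_inv by simp
    qed
  qed
  then obtain e where e: "\<And>\<beta>. e \<beta> \<in> \<Gamma> \<inter> Gs r" "\<And>\<beta>. \<pi> (e \<beta>) = inv\<^bsub>Q\<^esub> (proj_coeff g \<beta>)"
    using choice[of "\<lambda>\<beta> d. d \<in> \<Gamma> \<inter> Gs r \<and> \<pi> d = inv\<^bsub>Q\<^esub> (proj_coeff g \<beta>)"] by blast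
  define \<gamma> where "\<gamma> = subset_prod G r e"
  have "\<forall>\<alpha>\<in>FE. \<gamma> \<alpha> \<in> \<Gamma>"
    unfolding \<gamma>_def using e(1) by (intro ballI subset_prod_in_subgroup[OF \<Gamma>_subgroup]) blast
  moreover have "poly_upto G Gs n 0 \<gamma>" for n
    unfolding \<gamma>_def using e(1) Gs_antimono by (intro poly_upto_subset_prod) (meson IntD2 subsetD)
  moreover have "g \<alpha> \<otimes> \<gamma> \<alpha> \<in> Gs (Suc r)" if \<alpha>: "\<alpha> \<in> FE" for \<alpha>
  proof -
    define small where "small = {\<beta>. \<beta> \<subseteq> \<alpha> \<and> card \<beta> \<le> r}"
    have fin: "finite \<alpha>" "finite small" "finite (Pow \<alpha> - small)"
      using \<alpha> by (auto simp: FE_def small_def)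
    have coeff: "proj_coeff g \<in> A \<rightarrow> carrier Q" for A
      using Q.mobius_coeff_closed[OF proj_map_closed[OF g(2)]] by (simp add: proj_coeff_def)
    have \<gamma>r: "\<gamma> \<alpha> \<in> Gs r"
      unfolding \<gamma>_def using e(1) by (intro subset_prod_in_subgroup[OF Gs_subgroup]) blast
    have "\<pi> (\<gamma> \<alpha>) = finprod Q (\<lambda>\<beta>. inv\<^bsub>Q\<^esub> (proj_coeff g \<beta>)) small"
      unfolding \<gamma>_def small_def e(2)[symmetric] using e(1) fin(1) by (intro proj_subset_prod) blast
    also have "\<dots> = inv\<^bsub>Q\<^esub> (finprod Q (proj_coeff g) small)"
      by (rule Q.finprod_inv[OF coeff])
    finally have \<gamma>\<alpha>: "\<pi> (\<gamma> \<alpha>) = inv\<^bsub>Q\<^esub> (finprod Q (proj_coeff g) small)" .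
    have "Pow \<alpha> = small \<union> (Pow \<alpha> - small)"
      by (auto simp: small_def)
    then have "\<pi> (g \<alpha>) = finprod Q (proj_coeff g) small \<otimes>\<^bsub>Q\<^esub> finprod Q (proj_coeff g) (Pow \<alpha> - small)"
      using proj_eq_finprod_coeff[OF g(2) \<alpha>] Q.finprod_Un_disjoint[OF fin(2,3) _ coeff coeff] by simp
    also have "finprod Q (proj_coeff g) (Pow \<alpha> - small) = \<one>\<^bsub>Q\<^esub>"
      using proj_coeff_eq_one[OF g(2) g(1)] \<alpha> FE_subset
      by (intro Q.finprod_one_eqI) (auto simp: small_def)
    finally have "\<pi> (g \<alpha>) = finprod Q (proj_coeff g) small"
      using Q.finprod_closed[OF coeff] by simp
    then have "\<pi> (g \<alpha> \<otimes> \<gamma> \<alpha>) = \<one>\<^bsub>Q\<^esub>"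
      using proj_mult[OF _ \<gamma>r] g(2) \<alpha> \<gamma>\<alpha> Q.finprod_closed[OF coeff] by simp
    then show ?thesis
      using proj_eq_one_iff g(2) \<alpha> \<gamma>r Gs_mult by blast
  qed
  ultimately show ?thesis
    by blast
qed

end


context prefiltration_lattice
begin

text \<open>On the first layer \<open>G/Gs 1\<close>, which need not be abelian, a constant correction suffices, as
  a polynomial map is constant modulo \<open>Gs 1\<close>.\<close>
lemma level_one_correction:
  assumes g: "\<And>n. poly_upto G Gs n 0 g" "\<forall>\<alpha>\<in>FE. \<exists>x\<in>Gs 1. \<exists>c\<in>\<Gamma>. g \<alpha> = x \<otimes> c"
  shows "\<exists>\<gamma>. (\<forall>\<alpha>\<in>FE. \<gamma> \<alpha> \<in> \<Gamma>) \<and> (\<forall>n. poly_upto G Gs n 0 \<gamma>) \<and> (\<forall>\<alpha>\<in>FE. g \<alpha> \<otimes> \<gamma> \<alpha> \<in> Gs 1)"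
proof -
  obtain x0 c0 where x0: "x0 \<in> Gs 1" and c0: "c0 \<in> \<Gamma>" and g0: "g {} = x0 \<otimes> c0"
    using g(2) empty_in_FE by blast
  have c0_carrier: "c0 \<in> carrier G"
    using c0 subgroup.subset[OF \<Gamma>_subgroup] by auto
  have "inv c0 \<in> \<Gamma>"
    using c0 subgroup.m_inv_closed[OF \<Gamma>_subgroup] by auto
  moreover have "poly_upto G Gs n 0 (\<lambda>_. inv c0)" for n
    using poly_upto_monomial[of "{}" "inv c0" 0 n] c0_carrier Gs_0 by (simp add: monomial_def)
  moreover have "g \<alpha> \<otimes> inv c0 \<in> Gs 1" if \<alpha>: "\<alpha> \<in> FE" for \<alpha>
  proof -
    have c: "x0 \<in> carrier G" "g {} \<in> carrier G" "g \<alpha> \<in> carrier G"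
      using Gs_carrier[OF x0] poly_upto_carrier[OF g(1)] \<alpha> empty_in_FE by auto
    have "poly_upto G Gs 0 (Suc 0) (fdiff G \<alpha> g)"
      using g(1)[of 1] \<alpha> by (simp add: poly_upto_Suc)
    then have "fdiff G \<alpha> g {} \<in> Gs 1"
      using empty_in_FE by (simp add: poly_upto_0)
    then have d: "inv (g {}) \<otimes> g \<alpha> \<in> Gs 1"
      by (simp add: fdiff_def)
    have "g \<alpha> \<otimes> inv c0 = x0 \<otimes> (c0 \<otimes> (inv (g {}) \<otimes> g \<alpha>) \<otimes> inv c0)"
      using c c0_carrier g0 by (simp add: m_assoc inv_mult_group mult_inv_cancel_left)
    moreover have "c0 \<otimes> (inv (g {}) \<otimes> g \<alpha>) \<otimes> inv c0 \<in> Gs 1"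
      by (rule conj_in_Gs[OF c0_carrier d])
    ultimately show ?thesis
      using x0 by (simp add: Gs_mult)
  qed
  ultimately show ?thesis
    by (intro exI[of _ "\<lambda>_. inv c0"]) blast
qed

lemma correction_step:
  assumes "1 \<le> r" "\<And>n. poly_upto G Gs n 0 g" "\<forall>\<alpha>\<in>FE. g \<alpha> \<in> Gs r"
    "\<forall>\<alpha>\<in>FE. \<exists>x\<in>Gs (Suc r). \<exists>c\<in>\<Gamma>. g \<alpha> = x \<otimes> c"
  shows "\<exists>\<gamma>. (\<forall>\<alpha>\<in>FE. \<gamma> \<alpha> \<in> \<Gamma>) \<and> (\<forall>n. poly_upto G Gs n 0 \<gamma>) \<and> (\<forall>\<alpha>\<in>FE. g \<alpha> \<otimes> \<gamma> \<alpha> \<in> Gs (Suc r))"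
proof -
  obtain Q :: "'a set monoid" and \<pi> where Q: "comm_group Q"
    "\<And>a. a \<in> Gs r \<Longrightarrow> \<pi> a \<in> carrier Q"
    "\<And>a b. a \<in> Gs r \<Longrightarrow> b \<in> Gs r \<Longrightarrow> \<pi> (a \<otimes> b) = \<pi> a \<otimes>\<^bsub>Q\<^esub> \<pi> b"
    "\<And>a. a \<in> Gs r \<Longrightarrow> \<pi> a = \<one>\<^bsub>Q\<^esub> \<longleftrightarrow> a \<in> Gs (Suc r)"
    using abelian_layer[OF assms(1)] by blast
  interpret layer_projection G Gs \<Gamma> Q r \<pi>
    using Q by (intro layer_projection.intro layer_projection_axioms.intro prefiltration_lattice_axioms) auto
  show ?thesis
    by (rule layer_correction[OF assms(2-4)])
qed

lemma correction_into_Gs: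
  assumes "\<And>n. poly_upto G Gs n 0 g" "\<forall>\<alpha>\<in>FE. \<exists>x\<in>Gs r. \<exists>c\<in>\<Gamma>. g \<alpha> = x \<otimes> c"
  shows "\<exists>\<gamma>. (\<forall>\<alpha>\<in>FE. \<gamma> \<alpha> \<in> \<Gamma>) \<and> (\<forall>n. poly_upto G Gs n 0 \<gamma>) \<and> (\<forall>\<alpha>\<in>FE. g \<alpha> \<otimes> \<gamma> \<alpha> \<in> Gs r)"
  using assms
proof (induction r arbitrary: g)
  case 0
  have "\<forall>\<alpha>\<in>FE. g \<alpha> \<otimes> \<one> \<in> Gs 0"
    using poly_upto_carrier[OF "0.prems"(1)] Gs_0 by simp
  then show ?case
    using subgroup.one_closed[OF \<Gamma>_subgroup] poly_upto_one by (intro exI[of _ "\<lambda>_. \<one>"]) blast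
next
  case (Suc r)
  have "\<forall>\<alpha>\<in>FE. \<exists>x\<in>Gs r. \<exists>c\<in>\<Gamma>. g \<alpha> = x \<otimes> c"
    using Suc.prems(2) Gs_Suc_subset by blast
  then obtain \<gamma>1 where \<gamma>1: "\<forall>\<alpha>\<in>FE. \<gamma>1 \<alpha> \<in> \<Gamma>" "\<And>n. poly_upto G Gs n 0 \<gamma>1"
      "\<forall>\<alpha>\<in>FE. g \<alpha> \<otimes> \<gamma>1 \<alpha> \<in> Gs r"
    using Suc.IH[OF Suc.prems(1)] by blast
  define g1 where "g1 = mult_fun G g \<gamma>1"
  have carrier: "g \<alpha> \<in> carrier G" "\<gamma>1 \<alpha> \<in> carrier G" if "\<alpha> \<in> FE" for \<alpha>
    using poly_upto_carrier[OF Suc.prems(1)] \<gamma>1(1) subgroup.subset[OF \<Gamma>_subgroup] that by auto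
  have g1: "\<And>n. poly_upto G Gs n 0 g1" "\<forall>\<alpha>\<in>FE. g1 \<alpha> \<in> Gs r"
    unfolding g1_def using poly_upto_mult[OF Suc.prems(1) \<gamma>1(2)] \<gamma>1(3) by (simp_all add: mult_fun_def)
  have "\<forall>\<alpha>\<in>FE. \<exists>x\<in>Gs (Suc r). \<exists>c\<in>\<Gamma>. g1 \<alpha> = x \<otimes> c"
  proof
    fix \<alpha> assume \<alpha>: "\<alpha> \<in> FE"
    then obtain x c where x: "x \<in> Gs (Suc r)" and c: "c \<in> \<Gamma>" and gx: "g \<alpha> = x \<otimes> c"
      using Suc.prems(2) by blast
    have "g1 \<alpha> = x \<otimes> (c \<otimes> \<gamma>1 \<alpha>)"
      unfolding g1_def mult_fun_def gx
      using Gs_carrier[OF x] subgroup.mem_carrier[OF \<Gamma>_subgroup c] carrier(2)[OF \<alpha>] by (simp add: m_assoc)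
    moreover have "c \<otimes> \<gamma>1 \<alpha> \<in> \<Gamma>"
      using c \<gamma>1(1) \<alpha> subgroup.m_closed[OF \<Gamma>_subgroup] by blast
    ultimately show "\<exists>x\<in>Gs (Suc r). \<exists>c\<in>\<Gamma>. g1 \<alpha> = x \<otimes> c"
      using x by blast
  qed
  then obtain \<gamma>2 where \<gamma>2: "\<forall>\<alpha>\<in>FE. \<gamma>2 \<alpha> \<in> \<Gamma>" "\<And>n. poly_upto G Gs n 0 \<gamma>2"
      "\<forall>\<alpha>\<in>FE. g1 \<alpha> \<otimes> \<gamma>2 \<alpha> \<in> Gs (Suc r)"
    using level_one_correction[OF g1(1)] correction_step[OF _ g1] by (cases r) auto
  have "g \<alpha> \<otimes> mult_fun G \<gamma>1 \<gamma>2 \<alpha> = g1 \<alpha> \<otimes> \<gamma>2 \<alpha>" if "\<alpha> \<in> FE" for \<alpha>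
    using carrier[OF that] \<gamma>2(1) subgroup.subset[OF \<Gamma>_subgroup] that
    by (auto simp: g1_def mult_fun_def m_assoc)
  then show ?case
    using \<gamma>1 \<gamma>2 subgroup.m_closed[OF \<Gamma>_subgroup] poly_upto_mult[OF \<gamma>1(2) \<gamma>2(2)]
    by (intro exI[of _ "mult_fun G \<gamma>1 \<gamma>2"]) (simp add: mult_fun_def)
qed

end


section \<open>Polynomial maps into the sub-nilmanifold\<close>

context group
begin

lemma l_coset_eq_iff:
  assumes "subgroup H G" "x \<in> carrier G" "y \<in> carrier G"
  shows "x <# H = y <# H \<longleftrightarrow> inv x \<otimes> y \<in> H"
proof
  assume "x <# H = y <# H"
  moreover have "y \<in> y <# H"
    using assms(3) subgroup.one_closed[OF assms(1)] by (force simp: l_coset_def)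
  ultimately obtain h where "h \<in> H" "y = x \<otimes> h"
    unfolding l_coset_def by auto
  then show "inv x \<otimes> y \<in> H"
    using assms(2) subgroup.mem_carrier[OF assms(1)] by (simp add: inv_mult_cancel_left)
next
  assume "inv x \<otimes> y \<in> H"
  then have "y \<in> x <# H"
    by (rule subgroup.lcos_module_rev[OF assms(1) is_group assms(2,3)])
  then show "x <# H = y <# H"
    by (rule l_repr_independence[OF _ assms(2,1)])
qed

lemma l_coset_set_mult_subgroup:
  assumes "subgroup \<Lambda> G" "subgroup \<Gamma> G" "\<Lambda> \<subseteq> \<Gamma>" "x \<in> carrier G"
  shows "(x <# \<Lambda>) <#> \<Gamma> = x <# \<Gamma>"
proof -
  have "\<Lambda> <#> \<Gamma> = \<Gamma>"
  proof
    show "\<Lambda> <#> \<Gamma> \<subseteq> \<Gamma>"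
      using assms(3) subgroup.m_closed[OF assms(2)] by (auto simp: set_mult_def)
    show "\<Gamma> \<subseteq> \<Lambda> <#> \<Gamma>"
      using subgroup.one_closed[OF assms(1)] subgroup.mem_carrier[OF assms(2)]
      by (force simp: set_mult_def)
  qed
  then show ?thesis
    using setmult_lcos_assoc[OF subgroup.subset[OF assms(1)] subgroup.subset[OF assms(2)] assms(4)]
    by simp
qed

end

context prefiltered_group
begin

lemma poly_map_imp_poly_upto_0: "poly_map G Gs g \<Longrightarrow> poly_upto G Gs n 0 g"
  using poly_map_imp_poly_upto is_group Gs_one by blast

text \<open>With \<open>G\<^sub>d\<^sub>+\<^sub>1\<close> trivial, derivatives of order at most \<open>d\<close> already decide polynomiality;
  those of order at most \<open>r\<close> lie in \<open>Gs r\<close> for every map with values in \<open>Gs r\<close>.\<close>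
lemma poly_map_truncated_iff:
  assumes top: "Gs (Suc d) = {\<one>}" and "r \<le> d"
  shows "poly_map G (\<lambda>i. if i \<le> r then Gs r else Gs i) g \<longleftrightarrow> poly_map G Gs g \<and> (\<forall>\<alpha>\<in>FE. g \<alpha> \<in> Gs r)"
    (is "poly_map G ?Gt g \<longleftrightarrow> _")
proof
  have Gt_Gs: "?Gt i \<subseteq> Gs i" for i
    using Gs_antimono by auto
  have Gt_one: "\<one> \<in> ?Gt i" for i
    using Gs_one by simp
  assume g: "poly_map G ?Gt g"
  then have "poly_upto G ?Gt n 0 g" for n
    using poly_map_imp_poly_upto is_group Gt_one by blast
  then have "poly_upto G Gs (Suc d) 0 g" "poly_upto G ?Gt 0 0 g"
    using Gt_Gs unfolding poly_upto_def by blast+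
  then show "poly_map G Gs g \<and> (\<forall>\<alpha>\<in>FE. g \<alpha> \<in> Gs r)"
    using poly_upto_imp_poly_map[where Gs = Gs and N = "Suc d", OF top] by (simp add: poly_upto_0)
next
  assume g: "poly_map G Gs g \<and> (\<forall>\<alpha>\<in>FE. g \<alpha> \<in> Gs r)"
  have "poly_upto G ?Gt (Suc d) 0 g"
    unfolding poly_upto_def
  proof (intro allI impI)
    fix \<beta>s \<alpha> assume \<beta>s: "length \<beta>s \<le> Suc d" "set \<beta>s \<subseteq> FE" and \<alpha>: "\<alpha> \<in> FE"
    show "fdiffs G \<beta>s g \<alpha> \<in> ?Gt (0 + length \<beta>s)"
    proof (cases "length \<beta>s \<le> r")
      case True
      then show ?thesis
        using g \<beta>s \<alpha> by (simp add: fdiffs_in_subgroup[OF Gs_subgroup])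
    next
      case False
      then show ?thesis
        using poly_map_imp_poly_upto_0[of g "Suc d"] g \<beta>s \<alpha> unfolding poly_upto_def by simp
    qed
  qed
  then show "poly_map G ?Gt g"
    using assms by (intro poly_upto_imp_poly_map[of _ "Suc d"]) auto
qed

end

context prefiltration_lattice
begin

lemma coset_incl_poly_quot_bij:
  assumes top: "Gs (Suc d) = {\<one>}" and "r \<le> d"
  shows "bij_betw (\<lambda>h. \<lambda>\<alpha>\<in>FE. coset_incl G \<Gamma> (h \<alpha>))
           (poly_quot G (\<lambda>i. if i \<le> r then Gs r else Gs i) (Gs r \<inter> \<Gamma>))
           {f \<in> poly_quot G Gs \<Gamma>. \<forall>\<alpha>\<in>FE. f \<alpha> \<in> {g <# \<Gamma> | g. g \<in> Gs r}}"
    (is "bij_betw ?\<iota> (poly_quot G ?Gt ?\<Lambda>) ?F")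
proof -
  have \<Lambda>: "subgroup ?\<Lambda> G"
    by (rule subgroups_Inter_pair[OF Gs_subgroup \<Gamma>_subgroup])
  note truncated = poly_map_truncated_iff[OF assms]
  have \<iota>: "?\<iota> (\<lambda>\<alpha>\<in>FE. g \<alpha> <# ?\<Lambda>) = (\<lambda>\<alpha>\<in>FE. g \<alpha> <# \<Gamma>)" if g: "\<forall>\<alpha>\<in>FE. g \<alpha> \<in> Gs r" for g
  proof (rule restrict_ext)
    fix \<alpha> assume "\<alpha> \<in> FE"
    moreover have "g \<alpha> \<in> carrier G" if "\<alpha> \<in> FE"
      using g that Gs_carrier by blast
    ultimately show "coset_incl G \<Gamma> ((\<lambda>\<alpha>\<in>FE. g \<alpha> <# ?\<Lambda>) \<alpha>) = g \<alpha> <# \<Gamma>"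
      by (simp add: coset_incl_def l_coset_set_mult_subgroup[OF \<Lambda> \<Gamma>_subgroup Int_lower2])
  qed
  have "inj_on ?\<iota> (poly_quot G ?Gt ?\<Lambda>)"
  proof (rule inj_onI)
    fix h1 h2 assume "h1 \<in> poly_quot G ?Gt ?\<Lambda>" "h2 \<in> poly_quot G ?Gt ?\<Lambda>" and eq: "?\<iota> h1 = ?\<iota> h2"
    then obtain g1 g2 where g: "poly_map G ?Gt g1" "h1 = (\<lambda>\<alpha>\<in>FE. g1 \<alpha> <# ?\<Lambda>)"
      "poly_map G ?Gt g2" "h2 = (\<lambda>\<alpha>\<in>FE. g2 \<alpha> <# ?\<Lambda>)"
      unfolding poly_quot_def by auto
    then have r: "\<forall>\<alpha>\<in>FE. g1 \<alpha> \<in> Gs r" "\<forall>\<alpha>\<in>FE. g2 \<alpha> \<in> Gs r"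
      using truncated by blast+
    have cosets: "(\<lambda>\<alpha>\<in>FE. g1 \<alpha> <# \<Gamma>) = (\<lambda>\<alpha>\<in>FE. g2 \<alpha> <# \<Gamma>)"
      using eq unfolding g(2,4) \<iota>[OF r(1)] \<iota>[OF r(2)] .
    have "inv (g1 \<alpha>) \<otimes> g2 \<alpha> \<in> ?\<Lambda>" if \<alpha>: "\<alpha> \<in> FE" for \<alpha>
    proof -
      have c: "g1 \<alpha> \<in> carrier G" "g2 \<alpha> \<in> carrier G"
        using r \<alpha> Gs_carrier by blast+
      have "inv (g1 \<alpha>) \<otimes> g2 \<alpha> \<in> \<Gamma>"
        using l_coset_eq_iff[OF \<Gamma>_subgroup c] fun_cong[OF cosets, of \<alpha>] \<alpha> by simp
      moreover have "inv (g1 \<alpha>) \<otimes> g2 \<alpha> \<in> Gs r"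
        using r \<alpha> by (simp add: Gs_mult Gs_inv)
      ultimately show ?thesis
        by simp
    qed
    then show "h1 = h2"
      unfolding g(2,4)
    proof (intro restrict_ext)
      fix \<alpha> assume "\<alpha> \<in> FE"
      moreover have "g1 \<alpha> \<in> carrier G" "g2 \<alpha> \<in> carrier G" if "\<alpha> \<in> FE"
        using r that Gs_carrier by blast+
      ultimately show "g1 \<alpha> <# ?\<Lambda> = g2 \<alpha> <# ?\<Lambda>"
        using l_coset_eq_iff[OF \<Lambda>] \<open>\<And>\<alpha>. \<alpha> \<in> FE \<Longrightarrow> inv (g1 \<alpha>) \<otimes> g2 \<alpha> \<in> ?\<Lambda>\<close> by blast
    qed
  qed
  moreover have "?\<iota> ` poly_quot G ?Gt ?\<Lambda> \<subseteq> ?F"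
    using \<iota> truncated by (auto simp: poly_quot_def)
  moreover have "?F \<subseteq> ?\<iota> ` poly_quot G ?Gt ?\<Lambda>"
  proof
    fix f assume "f \<in> ?F"
    then obtain g where g: "poly_map G Gs g" "f = (\<lambda>\<alpha>\<in>FE. g \<alpha> <# \<Gamma>)"
      and f: "\<forall>\<alpha>\<in>FE. f \<alpha> \<in> {x <# \<Gamma> | x. x \<in> Gs r}"
      unfolding poly_quot_def by auto
    have g_carrier: "g \<alpha> \<in> carrier G" if "\<alpha> \<in> FE" for \<alpha>
      using poly_upto_carrier[OF poly_map_imp_poly_upto_0[OF g(1)] that] .
    have "\<exists>x\<in>Gs r. \<exists>c\<in>\<Gamma>. g \<alpha> = x \<otimes> c" if \<alpha>: "\<alpha> \<in> FE" for \<alpha>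
    proof -
      obtain x where x: "x \<in> Gs r" "g \<alpha> <# \<Gamma> = x <# \<Gamma>"
        using f g(2) \<alpha> by auto
      then have "inv x \<otimes> g \<alpha> \<in> \<Gamma>"
        using l_coset_eq_iff[OF \<Gamma>_subgroup] Gs_carrier g_carrier \<alpha> by metis
      moreover have "g \<alpha> = x \<otimes> (inv x \<otimes> g \<alpha>)"
        using Gs_carrier[OF x(1)] g_carrier[OF \<alpha>] by (simp add: mult_inv_cancel_left)
      ultimately show ?thesis
        using x(1) by blast
    qed
    then obtain \<gamma> where \<gamma>: "\<forall>\<alpha>\<in>FE. \<gamma> \<alpha> \<in> \<Gamma>" "\<And>n. poly_upto G Gs n 0 \<gamma>"
      "\<forall>\<alpha>\<in>FE. g \<alpha> \<otimes> \<gamma> \<alpha> \<in> Gs r"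
      using correction_into_Gs[OF poly_map_imp_poly_upto_0[OF g(1)]] by blast
    define g' where "g' = mult_fun G g \<gamma>"
    have "poly_map G Gs g'"
      unfolding g'_def using poly_upto_mult[OF poly_map_imp_poly_upto_0[OF g(1)] \<gamma>(2)]
      by (intro poly_upto_imp_poly_map[where Gs = Gs and N = "Suc d", OF top])
    then have "(\<lambda>\<alpha>\<in>FE. g' \<alpha> <# ?\<Lambda>) \<in> poly_quot G ?Gt ?\<Lambda>"
      using truncated \<gamma>(3) by (auto simp: poly_quot_def g'_def mult_fun_def)
    moreover have "g' \<alpha> <# \<Gamma> = g \<alpha> <# \<Gamma>" if "\<alpha> \<in> FE" for \<alpha>
    proof -
      have "g' \<alpha> \<in> g \<alpha> <# \<Gamma>"
        using \<gamma>(1) that by (auto simp: g'_def mult_fun_def l_coset_def)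
      then show ?thesis
        using l_repr_independence[OF _ g_carrier[OF that] \<Gamma>_subgroup] by simp
    qed
    then have "?\<iota> (\<lambda>\<alpha>\<in>FE. g' \<alpha> <# ?\<Lambda>) = f"
      unfolding g(2) using \<iota> \<gamma>(3) by (simp add: g'_def mult_fun_def cong: restrict_cong)
    ultimately show "f \<in> ?\<iota> ` poly_quot G ?Gt ?\<Lambda>"
      by blast
  qed
  ultimately show ?thesis
    unfolding bij_betw_def by blast
qed

end

lemma nilmanifold_prefiltration_lattice:
  assumes "nilmanifold G T Gs \<Gamma> d"
  shows "prefiltration_lattice G Gs \<Gamma>" "Gs (Suc d) = {\<one>\<^bsub>G\<^esub>}"
proof -
  have G: "group G" and \<Gamma>: "subgroup \<Gamma> G" and "prefiltration G Gs d"
    using assms unfolding nilmanifold_def lie_group_def topological_group_def by auto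
  then have Gs: "\<And>i. subgroup (Gs i) G" "Gs 0 = carrier G" "\<And>i. Gs (Suc i) \<subseteq> Gs i"
    "\<And>i j. comm_subgroup G (Gs i) (Gs j) \<subseteq> Gs (i + j)"
    and "Gs (Suc d) = {\<one>\<^bsub>G\<^esub>}"
    unfolding prefiltration_def by auto
  then show "Gs (Suc d) = {\<one>\<^bsub>G\<^esub>}" by simp
  have "commutator G x y \<in> Gs (i + j)" if "x \<in> Gs i" "y \<in> Gs j" for x y i j
  proof -
    have "grp_commutator G (inv\<^bsub>G\<^esub> x) (inv\<^bsub>G\<^esub> y) \<in> comm_subgroup G (Gs i) (Gs j)"
      unfolding comm_subgroup_def using that subgroup.m_inv_closed[OF Gs(1)]
      by (intro generate.incl) blast
    then show ?thesis
      using Gs(4) that subgroup.mem_carrier[OF Gs(1)]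
      by (auto simp: group.commutator_inv_eq_grp_commutator[OF G])
  qed
  then show "prefiltration_lattice G Gs \<Gamma>"
    using G \<Gamma> Gs
    by (intro prefiltration_lattice.intro prefiltered_group.intro prefiltered_group_axioms.intro
        prefiltration_lattice_axioms.intro)
qed

theorem lemma5p2:
  fixes G :: "('a, 'b) monoid_scheme" and T :: "'a topology"
    and Gs :: "nat \<Rightarrow> 'a set" and \<Gamma> :: "'a set" and d r :: nat
  assumes "nilmanifold G T Gs \<Gamma> d"
    and "r \<le> d"
  shows "bij_betw (\<lambda>h. \<lambda>\<alpha>\<in>FE. coset_incl G \<Gamma> (h \<alpha>))
           (poly_quot G (\<lambda>i. if i \<le> r then Gs r else Gs i) (Gs r \<inter> \<Gamma>))
           {f \<in> poly_quot G Gs \<Gamma>. \<forall>\<alpha>\<in>FE. f \<alpha> \<in> {g <#\<^bsub>G\<^esub> \<Gamma> | g. g \<in> Gs r}}"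
proof -
  interpret prefiltration_lattice G Gs \<Gamma>
    by (rule nilmanifold_prefiltration_lattice(1)[OF assms(1)])
  show ?thesis
    by (rule coset_incl_poly_quot_bij[OF nilmanifold_prefiltration_lattice(2)[OF assms(1)] assms(2)])
qed

end
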